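(* (1) For $n\geq 1$, a $2$-null CRC in $G_n$ with covering radius $\rho\geq 2$, $c_1=1$ and $c_2=3$ exists if and only if $n=2$; in that case its parameter matrix is $[0,4|1,0,3|3,0,1|4,0]$ (realized by the set of even-weight words of a perfect code in $G_2$). (2) For no $n\geq 1$ is there a $2$-null CRC in $G_n$ with covering radius $\rho\geq 2$, $c_1=2$ and $c_2=3$.
   Context: $G_n$: vertex set $\mathbb{Z}^n$, $x\sim y$ iff $\sum_i|x_i-y_i|=1$; weight of $x$ is $\sum_i|x_i|$. For a code $C$ with covering radius $\rho=\max_v d(v,C)$, $C_i=\{v:d(v,C)=i\}$. $C$ is a CRC if for all $i,j$ every vertex of $C_i$ has the same number $\alpha_{ij}$ of neighbours in $C_j$, with $\alpha_{ij}=0$ for $|i-j|>1$; $a_i=\alpha_{ii}$, $b_i=\alpha_{i,i+1}$, $c_i=\alpha_{i,i-1}$, parameter matrix written $[a_0,b_0|c_1,a_1,b_1|\ldots|c_\rho,a_\rho]$. $C$ is $r$-null if $a_0=\cdots=a_{r-1}=0$. A perfect code in $G_n$ is a vertex set meeting every closed ball of radius one in exactly one vertex. *)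

theory Defs
  imports Main
begin

text \<open>Vertices of G_n: integer vectors of length n, represented as functions
  nat => int vanishing outside the index set {0..<n}.\<close>
definition vert :: "nat \<Rightarrow> (nat \<Rightarrow> int) set" where
  "vert n = {x. \<forall>i\<ge>n. x i = 0}"

definition gdist :: "nat \<Rightarrow> (nat \<Rightarrow> int) \<Rightarrow> (nat \<Rightarrow> int) \<Rightarrow> nat" where
  "gdist n x y = nat (\<Sum>i<n. \<bar>x i - y i\<bar>)"

definition adj :: "nat \<Rightarrow> (nat \<Rightarrow> int) \<Rightarrow> (nat \<Rightarrow> int) \<Rightarrow> bool" where
  "adj n x y \<longleftrightarrow> (\<Sum>i<n. \<bar>x i - y i\<bar>) = 1"

definition weight :: "nat \<Rightarrow> (nat \<Rightarrow> int) \<Rightarrow> nat" where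
  "weight n x = nat (\<Sum>i<n. \<bar>x i\<bar>)"

definition dcode :: "nat \<Rightarrow> (nat \<Rightarrow> int) set \<Rightarrow> (nat \<Rightarrow> int) \<Rightarrow> nat" where
  "dcode n C v = Inf (gdist n v ` C)"

definition covering_radius :: "nat \<Rightarrow> (nat \<Rightarrow> int) set \<Rightarrow> nat \<Rightarrow> bool" where
  "covering_radius n C \<rho> \<longleftrightarrow> C \<noteq> {} \<and> C \<subseteq> vert n \<and>
     (\<forall>v\<in>vert n. dcode n C v \<le> \<rho>) \<and> (\<exists>v\<in>vert n. dcode n C v = \<rho>)"

definition layer :: "nat \<Rightarrow> (nat \<Rightarrow> int) set \<Rightarrow> nat \<Rightarrow> (nat \<Rightarrow> int) set" where
  "layer n C i = {v \<in> vert n. dcode n C v = i}"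

definition is_CRC :: "nat \<Rightarrow> (nat \<Rightarrow> int) set \<Rightarrow> nat \<Rightarrow> (nat \<Rightarrow> nat \<Rightarrow> nat) \<Rightarrow> bool" where
  "is_CRC n C \<rho> \<alpha> \<longleftrightarrow> covering_radius n C \<rho> \<and>
     (\<forall>i\<le>\<rho>. \<forall>j\<le>\<rho>. \<forall>v\<in>layer n C i.
        card {u \<in> vert n. adj n v u \<and> u \<in> layer n C j} = \<alpha> i j) \<and>
     (\<forall>i\<le>\<rho>. \<forall>j\<le>\<rho>. (i > j + 1 \<or> j > i + 1) \<longrightarrow> \<alpha> i j = 0)"

definition r_null :: "nat \<Rightarrow> (nat \<Rightarrow> nat \<Rightarrow> nat) \<Rightarrow> bool" where
  "r_null r \<alpha> \<longleftrightarrow> (\<forall>i<r. \<alpha> i i = 0)"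

definition perfect_code :: "nat \<Rightarrow> (nat \<Rightarrow> int) set \<Rightarrow> bool" where
  "perfect_code n P \<longleftrightarrow> P \<subseteq> vert n \<and>
     (\<forall>v\<in>vert n. \<exists>!u. u \<in> P \<and> gdist n v u \<le> 1)"

text \<open>The parameter matrix [0,4|1,0,3|3,0,1|4,0] (covering radius 3).
  a_i = alpha i i, b_i = alpha i (i+1), c_i = alpha i (i-1).\<close>
definition matrix_0413 :: "nat \<Rightarrow> (nat \<Rightarrow> nat \<Rightarrow> nat) \<Rightarrow> bool" where
  "matrix_0413 \<rho> \<alpha> \<longleftrightarrow> \<rho> = 3 \<and>
     \<alpha> 0 0 = 0 \<and> \<alpha> 0 1 = 4 \<and>
     \<alpha> 1 0 = 1 \<and> \<alpha> 1 1 = 0 \<and> \<alpha> 1 2 = 3 \<and>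
     \<alpha> 2 1 = 3 \<and> \<alpha> 2 2 = 0 \<and> \<alpha> 2 3 = 1 \<and>
     \<alpha> 3 2 = 4 \<and> \<alpha> 3 3 = 0"

end

(* Write e_i for the i-th unit vector. Every vertex of the layer C_1 (resp. C_2) of a 2-null
   CRC reaches its c_1 code neighbours (resp. its c_2 = 3 neighbours in C_1) by unit steps +-e_i,
   so everything reduces to locating codewords close to a given codeword x.

   If c_1 = 1, distinct codewords are at distance at least 4, and the third C_1-neighbour of the
   C_2-vertex x + s e_i + t e_j forces one of the leaps x + 3s e_i + t e_j, x + s e_i + 3t e_j into
   the code. A direction starts at most one leap, while every pair of directions along different
   coordinates yields one; this is impossible for n >= 3, and n = 1 leaves too few neighbours.
   For n = 2 the leaps form a pinwheel around each codeword, which pins down the covering radius 3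
   and all intersection numbers.

   If c_1 = 2, codewords x and x + s e_i + d e_l force x - s e_i + t e_j into the code for both
   t = +-1 and every third coordinate j, so x - s e_i has three code neighbours once n >= 3. For
   n = 2, the code neighbour x + e_0 + d e_1 of x + e_0 makes x + e_0 - d e_1 a C_2-vertex with
   four C_1-neighbours.

   The example is the even-weight half of the perfect code v_0 + 2 v_1 = 0 (mod 5); its distance
   function only depends on v_0 + 2 v_1 mod 5 and on the parity of v_0 + v_1. *)

theory Submission
  imports Defs "HOL-Library.Function_Algebras"
begin

definition axis :: "nat \<Rightarrow> int \<Rightarrow> nat \<Rightarrow> int" where
  "axis i s = (\<lambda>k. if k = i then s else 0)"

lemma axis_apply [simp]: "axis i s k = (if k = i then s else 0)"
  by (simp add: axis_def)

lemma axis_add: "axis i s + axis i t = axis i (s + t)"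
  by (auto simp: fun_eq_iff)

lemma axis_eq_axis_iff: "s \<noteq> 0 \<Longrightarrow> axis i s = axis j t \<longleftrightarrow> i = j \<and> s = t"
  by (auto simp: fun_eq_iff split: if_splits)

lemma add_axis_neq: "s \<noteq> 0 \<Longrightarrow> (i, s) \<noteq> (j, t) \<Longrightarrow> u + axis i s \<noteq> u + axis j t"
  by (simp add: axis_eq_axis_iff)

lemma add_two_axes_neq: "s \<noteq> 0 \<Longrightarrow> (j, t) \<noteq> (i, -s) \<Longrightarrow> x + axis i s + axis j t \<noteq> x"
proof
  assume "s \<noteq> 0" "(j, t) \<noteq> (i, -s)" and eq: "x + axis i s + axis j t = x"
  have "(x + axis i s + axis j t) i = x i" by (simp only: eq)
  thus False using \<open>s \<noteq> 0\<close> \<open>(j, t) \<noteq> (i, -s)\<close> by (auto split: if_splits)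
qed

lemma vert_add_axis: "x \<in> vert n \<Longrightarrow> i < n \<Longrightarrow> x + axis i s \<in> vert n"
  by (auto simp: vert_def)

lemma vert_2_eqI:
  assumes "u \<in> vert 2" "v \<in> vert 2" "u 0 = v 0" "u 1 = v 1"
  shows "u = v"
proof
  fix k
  show "u k = v k"
    using assms by (cases "k < 2") (auto simp: vert_def less_2_cases_iff)
qed

lemma gdist_sym: "gdist n x y = gdist n y x"
  by (simp add: gdist_def abs_minus_commute)

lemma gdist_triangle: "gdist n x z \<le> gdist n x y + gdist n y z"
proof -
  have "(\<Sum>i<n. \<bar>x i - z i\<bar>) \<le> (\<Sum>i<n. \<bar>x i - y i\<bar>) + (\<Sum>i<n. \<bar>y i - z i\<bar>)"
    unfolding sum.distrib[symmetric] by (rule sum_mono) arith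
  moreover have "(\<Sum>i<n. \<bar>x i - y i\<bar>) \<ge> 0" "(\<Sum>i<n. \<bar>y i - z i\<bar>) \<ge> 0"
    by (auto intro: sum_nonneg)
  ultimately show ?thesis unfolding gdist_def by linarith
qed

lemma gdist_eq_0_iff: "x \<in> vert n \<Longrightarrow> y \<in> vert n \<Longrightarrow> gdist n x y = 0 \<longleftrightarrow> x = y"
proof
  assume v: "x \<in> vert n" "y \<in> vert n" and "gdist n x y = 0"
  hence "(\<Sum>i<n. \<bar>x i - y i\<bar>) = 0" by (simp add: gdist_def order_antisym sum_nonneg)
  hence "\<forall>i<n. x i = y i" by (simp add: sum_nonneg_eq_0_iff)
  thus "x = y" using v by (auto simp: vert_def fun_eq_iff) (metis not_le)
qed (simp add: gdist_def)

lemma gdist_2: "gdist 2 u v = nat (\<bar>u 0 - v 0\<bar> + \<bar>u 1 - v 1\<bar>)"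
  by (simp add: gdist_def numeral_2_eq_2 lessThan_Suc)

lemma adj_iff_gdist: "adj n x y \<longleftrightarrow> gdist n x y = 1"
proof -
  have "(\<Sum>i<n. \<bar>x i - y i\<bar>) \<ge> 0" by (rule sum_nonneg) simp
  thus ?thesis unfolding adj_def gdist_def by linarith
qed

lemma adj_sym: "adj n x y = adj n y x"
  by (simp add: adj_def abs_minus_commute)

lemma adj_add_axis: "i < n \<Longrightarrow> \<bar>s\<bar> = 1 \<Longrightarrow> adj n x (x + axis i s)"
proof -
  assume "i < n" "\<bar>s\<bar> = 1"
  have "(\<Sum>k<n. \<bar>x k - (x + axis i s) k\<bar>) = (\<Sum>k<n. if k = i then \<bar>s\<bar> else 0)"
    by (rule sum.cong) auto
  thus ?thesis using \<open>i < n\<close> \<open>\<bar>s\<bar> = 1\<close> by (simp add: adj_def)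
qed

lemma adj_add_axis': "i < n \<Longrightarrow> \<bar>s\<bar> = 1 \<Longrightarrow> adj n (x + axis i s) x"
  using adj_add_axis adj_sym by metis

lemma adjE:
  assumes "adj n x y" "x \<in> vert n" "y \<in> vert n"
  obtains i s where "i < n" "\<bar>s\<bar> = 1" "y = x + axis i s"
proof -
  define d where "d k = y k - x k" for k
  have sum_d: "(\<Sum>k<n. \<bar>d k\<bar>) = 1"
    using assms(1) by (simp add: adj_def d_def abs_minus_commute)
  have "\<exists>i<n. d i \<noteq> 0"
  proof (rule ccontr)
    assume "\<not> (\<exists>i<n. d i \<noteq> 0)"
    hence "(\<Sum>k<n. \<bar>d k\<bar>) = 0" by simp
    thus False using sum_d by simp
  qed
  then obtain i where i: "i < n" "d i \<noteq> 0" by blast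
  have "(\<Sum>k<n. \<bar>d k\<bar>) = \<bar>d i\<bar> + (\<Sum>k\<in>{..<n}-{i}. \<bar>d k\<bar>)"
    using i by (simp add: sum.remove)
  moreover have "(\<Sum>k\<in>{..<n}-{i}. \<bar>d k\<bar>) \<ge> 0" by (rule sum_nonneg) simp
  ultimately have di: "\<bar>d i\<bar> = 1" and rest: "(\<Sum>k\<in>{..<n}-{i}. \<bar>d k\<bar>) = 0"
    using sum_d i(2) by linarith+
  have "d k = 0" if "k \<noteq> i" for k
  proof (cases "k < n")
    case True
    thus ?thesis using rest that by (simp add: sum_nonneg_eq_0_iff)
  next
    case False
    thus ?thesis using assms(2,3) by (simp add: d_def vert_def)
  qed
  hence "y = x + axis i (d i)" by (auto simp: fun_eq_iff d_def)
  thus ?thesis using that i di by blast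
qed

definition nbrs :: "nat \<Rightarrow> (nat \<Rightarrow> int) \<Rightarrow> (nat \<Rightarrow> int) set" where
  "nbrs n v = {w \<in> vert n. adj n v w}"

lemma nbrs_eq_image:
  assumes "v \<in> vert n"
  shows "nbrs n v = (\<lambda>(i, s). v + axis i s) ` ({..<n} \<times> {1, -1})"
proof
  show "nbrs n v \<subseteq> (\<lambda>(i, s). v + axis i s) ` ({..<n} \<times> {1, -1})"
  proof
    fix w assume "w \<in> nbrs n v"
    then obtain i s where "i < n" "\<bar>s\<bar> = 1" "w = v + axis i s"
      using assms by (auto simp: nbrs_def elim: adjE)
    thus "w \<in> (\<lambda>(i, s). v + axis i s) ` ({..<n} \<times> {1, -1})"
      by (auto simp: abs_if split: if_splits)
  qed
qed (use assms in \<open>auto simp: nbrs_def vert_add_axis adj_add_axis\<close>)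

lemma finite_nbrs: "v \<in> vert n \<Longrightarrow> finite (nbrs n v)"
  by (simp add: nbrs_eq_image)

lemma card_nbrs_le: "v \<in> vert n \<Longrightarrow> card (nbrs n v) \<le> 2 * n"
proof -
  assume v: "v \<in> vert n"
  have "card (nbrs n v) \<le> card ({..<n} \<times> {1::int, -1})"
    unfolding nbrs_eq_image[OF v] by (intro card_image_le) simp
  thus ?thesis by (simp add: card_cartesian_product)
qed

lemma nbrs_2:
  assumes "v \<in> vert 2" "\<bar>d\<bar> = 1"
  shows "nbrs 2 v = {v + axis 0 1, v + axis 0 (-1), v + axis 1 d, v + axis 1 (-d)}"
  using assms by (auto simp: nbrs_eq_image less_2_cases_iff abs_if split: if_splits)

lemma card_nbrs_2:
  assumes "v \<in> vert 2"
  shows "card (nbrs 2 v) = 4"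
proof -
  have "v + axis 0 1 \<noteq> v + axis 0 (-1)" "v + axis 0 1 \<noteq> v + axis 1 1"
    "v + axis 0 1 \<noteq> v + axis 1 (-1)" "v + axis 0 (-1) \<noteq> v + axis 1 1"
    "v + axis 0 (-1) \<noteq> v + axis 1 (-1)" "v + axis 1 1 \<noteq> v + axis 1 (-1)"
    by (rule add_axis_neq; simp)+
  moreover have "nbrs 2 v = {v + axis 0 1, v + axis 0 (-1), v + axis 1 1, v + axis 1 (-1)}"
    using nbrs_2[OF assms, of 1] by simp
  ultimately show ?thesis by simp
qed

lemma gdist_step_towards:
  assumes x: "x \<in> vert n" and z: "z \<in> vert n" and g: "gdist n x z = Suc m"
  obtains w where "w \<in> vert n" "adj n x w" "gdist n w z = m"
proof -
  have "x \<noteq> z" using gdist_eq_0_iff[OF x z] g by simp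
  then obtain i where i: "i < n" "x i \<noteq> z i"
    using x z by (auto simp: vert_def fun_eq_iff) (metis not_le)
  define w where "w = x + axis i (sgn (z i - x i))"
  have "\<bar>w k - z k\<bar> = \<bar>x k - z k\<bar> - (if k = i then 1 else 0)" for k
    using i(2) by (auto simp: w_def sgn_if)
  hence "(\<Sum>k<n. \<bar>w k - z k\<bar>) = (\<Sum>k<n. \<bar>x k - z k\<bar>) - 1"
    using i(1) by (simp add: sum_subtractf)
  hence "gdist n w z = m" using g by (simp add: gdist_def)
  moreover have "w \<in> vert n" "adj n x w"
    using x i by (simp_all add: w_def vert_add_axis adj_add_axis abs_sgn)
  ultimately show ?thesis using that by blast
qed

lemma dcode_le: "z \<in> C \<Longrightarrow> dcode n C v \<le> gdist n v z"
  unfolding dcode_def Inf_nat_def by (rule Least_le) (rule imageI)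

lemma dcode_attained:
  assumes "C \<noteq> {}"
  obtains z where "z \<in> C" "dcode n C v = gdist n v z"
proof -
  have "dcode n C v \<in> gdist n v ` C" unfolding dcode_def using assms by (intro Inf_nat_def1) auto
  thus ?thesis using that by blast
qed

lemma dcode_eq_0_iff:
  assumes "C \<noteq> {}" "C \<subseteq> vert n" "v \<in> vert n"
  shows "dcode n C v = 0 \<longleftrightarrow> v \<in> C"
proof
  assume "dcode n C v = 0"
  moreover obtain z where "z \<in> C" "dcode n C v = gdist n v z" using dcode_attained[OF assms(1)] .
  ultimately show "v \<in> C" using assms gdist_eq_0_iff[of v n z] by auto
qed (use dcode_le[of v C n v] in \<open>simp add: gdist_def\<close>)

lemma dcode_adj_le:
  assumes "C \<noteq> {}" "adj n v w"
  shows "dcode n C w \<le> dcode n C v + 1"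
proof -
  obtain z where z: "z \<in> C" "dcode n C v = gdist n v z" using dcode_attained[OF assms(1)] .
  have "dcode n C w \<le> gdist n w v + gdist n v z"
    using dcode_le[OF z(1)] gdist_triangle order_trans by blast
  thus ?thesis using z assms(2) by (simp add: adj_iff_gdist gdist_sym)
qed

lemma dcode_step_down:
  assumes "C \<noteq> {}" "C \<subseteq> vert n" "v \<in> vert n" "dcode n C v = Suc m"
  obtains w where "w \<in> vert n" "adj n v w" "dcode n C w = m"
proof -
  obtain z where z: "z \<in> C" "dcode n C v = gdist n v z" using dcode_attained[OF assms(1)] .
  obtain w where w: "w \<in> vert n" "adj n v w" "gdist n w z = m"
    using gdist_step_towards[OF assms(3), of z m] z assms by auto
  have "dcode n C w \<le> m" using dcode_le[OF z(1), of n w] w by simp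
  moreover have "adj n w v" using w(2) adj_sym by blast
  hence "dcode n C v \<le> dcode n C w + 1" by (rule dcode_adj_le[OF assms(1)])
  ultimately have "dcode n C w = m" using assms(4) by simp
  thus ?thesis using that w by blast
qed

section \<open>2-null completely regular codes\<close>

locale null2_crc =
  fixes n :: nat and C :: "(nat \<Rightarrow> int) set" and \<rho> :: nat and \<alpha> :: "nat \<Rightarrow> nat \<Rightarrow> nat"
  assumes crc: "is_CRC n C \<rho> \<alpha>" and null: "r_null 2 \<alpha>" and rho_ge_2: "2 \<le> \<rho>"
begin

abbreviation L :: "nat \<Rightarrow> (nat \<Rightarrow> int) set" where "L i \<equiv> layer n C i"

lemma C_nonempty: "C \<noteq> {}" and C_subset_vert: "C \<subseteq> vert n"
  and dcode_le_rho: "v \<in> vert n \<Longrightarrow> dcode n C v \<le> \<rho>"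
  and rho_attained: "\<exists>v\<in>vert n. dcode n C v = \<rho>"
  using crc by (auto simp: is_CRC_def covering_radius_def)

lemma one_le_rho: "1 \<le> \<rho>"
  using rho_ge_2 by simp

lemma alpha_0_0: "\<alpha> 0 0 = 0" and alpha_1_1: "\<alpha> 1 1 = 0"
  using null by (auto simp: r_null_def)

lemma mem_L: "v \<in> L i \<longleftrightarrow> v \<in> vert n \<and> dcode n C v = i"
  by (simp add: layer_def)

lemma L_0: "L 0 = C"
  using dcode_eq_0_iff[OF C_nonempty C_subset_vert] C_subset_vert by (auto simp: mem_L)

lemma card_nbrs_L: "v \<in> L i \<Longrightarrow> i \<le> \<rho> \<Longrightarrow> j \<le> \<rho> \<Longrightarrow> card (nbrs n v \<inter> L j) = \<alpha> i j"
proof -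
  assume "v \<in> L i" "i \<le> \<rho>" "j \<le> \<rho>"
  moreover have "nbrs n v \<inter> L j = {u \<in> vert n. adj n v u \<and> u \<in> L j}" by (auto simp: nbrs_def)
  ultimately show ?thesis using crc by (simp add: is_CRC_def)
qed

lemma card_le_alpha:
  assumes "v \<in> L i" "i \<le> \<rho>" "j \<le> \<rho>" "A \<subseteq> nbrs n v \<inter> L j"
  shows "card A \<le> \<alpha> i j"
proof -
  have "finite (nbrs n v \<inter> L j)" using assms(1) finite_nbrs by (auto simp: mem_L)
  thus ?thesis using card_mono[OF _ assms(4)] card_nbrs_L[OF assms(1-3)] by simp
qed

lemma exists_nbr_outside:
  assumes "v \<in> L i" "i \<le> \<rho>" "j \<le> \<rho>" "finite A" "card A < \<alpha> i j"
  obtains w where "w \<in> nbrs n v \<inter> L j" "w \<notin> A"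
proof -
  have "\<not> nbrs n v \<inter> L j \<subseteq> A"
  proof
    assume "nbrs n v \<inter> L j \<subseteq> A"
    hence "\<alpha> i j \<le> card A" using card_mono[OF assms(4)] card_nbrs_L[OF assms(1-3)] by metis
    thus False using assms(5) by simp
  qed
  thus ?thesis using that by blast
qed

lemma exists_axis_nbr_outside:
  assumes "v \<in> L i" "i \<le> \<rho>" "j \<le> \<rho>" "finite A" "card A < \<alpha> i j"
  obtains k c where "k < n" "\<bar>c\<bar> = 1" "v + axis k c \<in> L j" "v + axis k c \<notin> A"
proof -
  obtain w where w: "w \<in> nbrs n v \<inter> L j" "w \<notin> A" using exists_nbr_outside[OF assms] .
  have "adj n v w" "v \<in> vert n" "w \<in> vert n" using w(1) assms(1) by (simp_all add: nbrs_def mem_L)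
  then obtain k c where "k < n" "\<bar>c\<bar> = 1" "w = v + axis k c" by (rule adjE)
  thus ?thesis using that w by blast
qed

lemma card_code_nbrs_le: "v \<in> L 1 \<Longrightarrow> A \<subseteq> nbrs n v \<inter> C \<Longrightarrow> card A \<le> \<alpha> 1 0"
proof -
  assume "v \<in> L 1" "A \<subseteq> nbrs n v \<inter> C"
  thus ?thesis using card_le_alpha[of v 1 0 A] rho_ge_2 L_0 by simp
qed

lemma layer_nonempty: "k \<le> \<rho> \<Longrightarrow> L k \<noteq> {}"
proof -
  assume "k \<le> \<rho>"
  have "\<forall>v\<in>vert n. dcode n C v = k + d \<longrightarrow> L k \<noteq> {}" for d
  proof (induction d)
    case 0 thus ?case by (auto simp: mem_L)
  next
    case (Suc d)
    show ?case
    proof (intro ballI impI)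
      fix v assume "v \<in> vert n" "dcode n C v = k + Suc d"
      then obtain w where "w \<in> vert n" "dcode n C w = k + d"
        using dcode_step_down[OF C_nonempty C_subset_vert] by (metis add_Suc_right)
      thus "L k \<noteq> {}" using Suc by blast
    qed
  qed
  moreover obtain v where "v \<in> vert n" "dcode n C v = k + (\<rho> - k)"
    using rho_attained \<open>k \<le> \<rho>\<close> by auto
  ultimately show ?thesis by blast
qed

lemma alpha_2_1_le: "\<alpha> 2 1 \<le> 2 * n"
proof -
  obtain u where u: "u \<in> L 2" using layer_nonempty[OF rho_ge_2] by blast
  hence uv: "u \<in> vert n" by (simp add: mem_L)
  have "\<alpha> 2 1 = card (nbrs n u \<inter> L 1)" using card_nbrs_L[OF u rho_ge_2, of 1] rho_ge_2 by simp
  also have "\<dots> \<le> card (nbrs n u)" using finite_nbrs[OF uv] by (simp add: card_mono)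
  finally show ?thesis using card_nbrs_le[OF uv] by simp
qed

lemma code_nbr_in_L1: "x \<in> C \<Longrightarrow> w \<in> vert n \<Longrightarrow> adj n x w \<Longrightarrow> w \<in> L 1"
proof -
  assume a: "x \<in> C" "w \<in> vert n" "adj n x w"
  have "w \<notin> C"
  proof
    assume "w \<in> C"
    hence "{w} \<subseteq> nbrs n x \<inter> L 0" using a L_0 by (auto simp: nbrs_def)
    from card_le_alpha[of x 0 0, OF _ _ _ this] a(1) L_0 alpha_0_0 show False by simp
  qed
  moreover have "dcode n C x = 0"
    using dcode_eq_0_iff[OF C_nonempty C_subset_vert] a(1) C_subset_vert by auto
  hence "dcode n C w \<le> 1" using dcode_adj_le[OF C_nonempty a(3)] by simp
  moreover have "dcode n C w \<noteq> 0" using dcode_eq_0_iff[OF C_nonempty C_subset_vert a(2)] \<open>w \<notin> C\<close> by simp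
  ultimately show ?thesis using a(2) by (simp add: mem_L)
qed

lemma L1I_code_plus: "x \<in> C \<Longrightarrow> i < n \<Longrightarrow> \<bar>s\<bar> = 1 \<Longrightarrow> p = x + axis i s \<Longrightarrow> p \<in> L 1"
  using code_nbr_in_L1[of x p] adj_add_axis[of i n s x] vert_add_axis[of x n i s] C_subset_vert by auto

lemma L1I_plus_code: "z \<in> C \<Longrightarrow> z = p + axis i s \<Longrightarrow> p \<in> vert n \<Longrightarrow> i < n \<Longrightarrow> \<bar>s\<bar> = 1 \<Longrightarrow> p \<in> L 1"
  using code_nbr_in_L1[of z p] adj_add_axis'[of i n s p] by simp

lemma L1_nbr_notin_L1: "v \<in> L 1 \<Longrightarrow> adj n v w \<Longrightarrow> w \<notin> L 1"
proof
  assume a: "v \<in> L 1" "adj n v w" "w \<in> L 1"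
  hence "{w} \<subseteq> nbrs n v \<inter> L 1" by (auto simp: nbrs_def mem_L)
  from card_le_alpha[OF a(1) _ _ this] alpha_1_1 rho_ge_2 show False by simp
qed

lemma L2I: "v \<in> L 1 \<Longrightarrow> w \<in> vert n \<Longrightarrow> adj n v w \<Longrightarrow> w \<notin> C \<Longrightarrow> w \<in> L 2"
proof -
  assume a: "v \<in> L 1" "w \<in> vert n" "adj n v w" "w \<notin> C"
  have "dcode n C w \<le> 2" using dcode_adj_le[OF C_nonempty a(3)] a(1) by (simp add: mem_L)
  moreover have "dcode n C w \<noteq> 0" using dcode_eq_0_iff[OF C_nonempty C_subset_vert a(2)] a(4) by simp
  moreover have "w \<notin> L 1" using L1_nbr_notin_L1[OF a(1,3)] .
  ultimately show ?thesis using a(2) by (auto simp: mem_L)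
qed

lemma L2_disjoint_C: "u \<in> L 2 \<Longrightarrow> u \<notin> C"
  by (metis L_0 mem_L zero_neq_numeral)

lemma no_four_L1_nbrs:
  assumes u: "u \<in> L 2" and "\<alpha> 2 1 \<le> 3"
    and "i1 < n" "i2 < n" "i3 < n" "i4 < n"
    and s: "\<bar>s1\<bar> = 1" "\<bar>s2\<bar> = 1" "\<bar>s3\<bar> = 1" "\<bar>s4\<bar> = 1"
    and "u + axis i1 s1 \<in> L 1" "u + axis i2 s2 \<in> L 1" "u + axis i3 s3 \<in> L 1" "u + axis i4 s4 \<in> L 1"
    and d: "(i1, s1) \<noteq> (i2, s2)" "(i1, s1) \<noteq> (i3, s3)" "(i1, s1) \<noteq> (i4, s4)"
      "(i2, s2) \<noteq> (i3, s3)" "(i2, s2) \<noteq> (i4, s4)" "(i3, s3) \<noteq> (i4, s4)"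
  shows False
proof -
  let ?A = "{u + axis i1 s1, u + axis i2 s2, u + axis i3 s3, u + axis i4 s4}"
  have "s1 \<noteq> 0" "s2 \<noteq> 0" "s3 \<noteq> 0" using s by auto
  hence "u + axis i1 s1 \<noteq> u + axis i2 s2" "u + axis i1 s1 \<noteq> u + axis i3 s3"
    "u + axis i1 s1 \<noteq> u + axis i4 s4" "u + axis i2 s2 \<noteq> u + axis i3 s3"
    "u + axis i2 s2 \<noteq> u + axis i4 s4" "u + axis i3 s3 \<noteq> u + axis i4 s4"
    using d by (simp_all add: axis_eq_axis_iff)
  hence "card ?A = 4" by simp
  moreover have "?A \<subseteq> nbrs n u \<inter> L 1"
    using assms by (auto simp: nbrs_def mem_L adj_add_axis)
  ultimately show False using card_le_alpha[OF u _ _ \<open>?A \<subseteq> _\<close>] assms(2) rho_ge_2 by simp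
qed

lemma L_nbr_below:
  assumes "v \<in> L (Suc k)" "adj n v w" "w \<in> vert n" "c \<in> C" "gdist n w c \<le> k"
  shows "w \<in> L k"
proof -
  have "dcode n C w \<le> k" using dcode_le[OF assms(4), of n w] assms(5) by simp
  moreover have "adj n w v" using assms(2) adj_sym by blast
  hence "dcode n C v \<le> dcode n C w + 1" by (rule dcode_adj_le[OF C_nonempty])
  ultimately show ?thesis using assms(1,3) by (simp add: mem_L)
qed

end

section \<open>Parameters \<open>c\<^sub>1 = 1\<close>, \<open>c\<^sub>2 = 3\<close>\<close>

locale crc_1_3 = null2_crc +
  assumes alpha_1_0: "\<alpha> 1 0 = 1" and alpha_2_1: "\<alpha> 2 1 = 3"
begin

lemma no_code_at_dist_2:
  assumes y: "y \<in> C" and z: "z \<in> C" "z = y + axis i s + axis j t"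
    and m: "i < n" "j < n" and st: "\<bar>s\<bar> = 1" "\<bar>t\<bar> = 1" and "\<not> (i = j \<and> t = -s)"
  shows False
proof -
  have "y \<noteq> z"
  proof
    assume "y = z"
    hence "y i = z i" by simp
    thus False using z(2) assms(8) st by (auto split: if_splits)
  qed
  moreover have "{y, z} \<subseteq> nbrs n (y + axis i s) \<inter> C"
    using y z C_subset_vert adj_add_axis'[OF m(1) st(1)] adj_add_axis[OF m(2) st(2)]
    by (auto simp: nbrs_def)
  hence "card {y, z} \<le> 1"
    using card_code_nbrs_le[OF L1I_code_plus[OF y m(1) st(1) refl]] alpha_1_0 by simp
  ultimately show False by simp
qed

lemma code_nbr_unique:
  assumes "y + axis j t \<in> C" "y + axis j' t' \<in> C" "j < n" "j' < n" "\<bar>t\<bar> = 1" "\<bar>t'\<bar> = 1"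
  shows "(j, t) = (j', t')"
proof (rule ccontr)
  assume "(j, t) \<noteq> (j', t')"
  moreover have "y + axis j' t' = (y + axis j t) + axis j (-t) + axis j' t'"
    by (auto simp: fun_eq_iff)
  ultimately show False
    using no_code_at_dist_2[OF assms(1,2), of j "-t" j' t'] assms(3-6) by auto
qed

lemma diagonal_in_L2:
  assumes x: "x \<in> C" and ij: "i \<noteq> j" "i < n" "j < n" and st: "\<bar>s\<bar> = 1" "\<bar>t\<bar> = 1"
  shows "x + axis i s + axis j t \<in> L 2"
proof (rule L2I[OF L1I_code_plus[OF x ij(2) st(1) refl]])
  show "x + axis i s + axis j t \<in> vert n"
    using x C_subset_vert ij by (auto intro!: vert_add_axis)
  show "adj n (x + axis i s) (x + axis i s + axis j t)" using adj_add_axis[OF ij(3) st(2)] .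
  show "x + axis i s + axis j t \<notin> C" using no_code_at_dist_2[OF x _ refl ij(2,3) st] ij(1) by blast
qed

text \<open>Let \<open>w\<close> be a third \<open>C\<^sub>1\<close>-neighbour of the \<open>C\<^sub>2\<close>-vertex
  \<open>u = x + s e\<^sub>i + t e\<^sub>j\<close> and \<open>z\<close> the codeword next to \<open>w\<close>. If \<open>w = u + s e\<^sub>i\<close> then
  \<open>z = w + s e\<^sub>i\<close>, and \<open>w\<close> cannot leave the plane of \<open>e\<^sub>i\<close> and \<open>e\<^sub>j\<close>: otherwise some
  \<open>C\<^sub>2\<close>-vertex has four \<open>C\<^sub>1\<close>-neighbours.\<close>

lemma collinear_third_step:
  assumes x: "x \<in> C" and ij: "i \<noteq> j" "i < n" "j < n" "l < n"
    and st: "\<bar>s\<bar> = 1" "\<bar>t\<bar> = 1" "\<bar>d\<bar> = 1"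
    and z: "z \<in> C" "z = x + axis i s + axis j t + axis i s + axis l d"
    and ld: "(l, d) \<noteq> (i, -s)" "(l, d) \<noteq> (j, -t)"
  shows "(l, d) = (i, s)"
proof (rule ccontr)
  assume "(l, d) \<noteq> (i, s)"
  hence li: "l \<noteq> i" using ld(1) st by auto
  define u where "u = x + axis i s + axis l d"
  have u: "u \<in> L 2" unfolding u_def using diagonal_in_L2[OF x li[symmetric] ij(2,4) st(1,3)] .
  have uv: "u \<in> vert n" using u by (simp add: mem_L)
  show False
  proof (rule no_four_L1_nbrs[OF u _ ij(4) ij(2) ij(2) ij(3) _ _ st(1,2)])
    show "u + axis l (-d) \<in> L 1" by (rule L1I_code_plus[OF x ij(2) st(1)]) (auto simp: u_def fun_eq_iff)
    show "u + axis i (-s) \<in> L 1" by (rule L1I_code_plus[OF x ij(4) st(3)]) (auto simp: u_def fun_eq_iff)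
    show "u + axis i s \<in> L 1"
      by (rule L1I_plus_code[OF z(1) _ vert_add_axis[OF uv ij(2)] ij(3) st(2)])
        (auto simp: u_def z(2) fun_eq_iff)
    show "u + axis j t \<in> L 1"
      by (rule L1I_plus_code[OF z(1) _ vert_add_axis[OF uv ij(3)] ij(2) st(1)])
        (auto simp: u_def z(2) fun_eq_iff)
  qed (use li ij ld st alpha_2_1 in auto)
qed

lemma transverse_third_step:
  assumes x: "x \<in> C" and ijk: "i \<noteq> j" "k \<noteq> i" "k \<noteq> j" "i < n" "j < n" "k < n" "l < n"
    and st: "\<bar>s\<bar> = 1" "\<bar>t\<bar> = 1" "\<bar>c\<bar> = 1" "\<bar>d\<bar> = 1"
    and z: "z \<in> C" "z = x + axis i s + axis j t + axis k c + axis l d"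
    and ld: "(l, d) \<noteq> (k, -c)" "(l, d) \<noteq> (i, -s)" "(l, d) \<noteq> (j, t)"
  shows False
proof -
  define u where "u = x + axis i s + axis k c"
  have u: "u \<in> L 2" unfolding u_def using diagonal_in_L2[OF x ijk(2)[symmetric] ijk(4,6) st(1,3)] .
  have uv: "u \<in> vert n" using u by (simp add: mem_L)
  have w: "u + axis j t \<in> vert n" using vert_add_axis[OF uv ijk(5)] .
  show False
  proof (rule no_four_L1_nbrs[OF u _ ijk(6) ijk(4) ijk(5) ijk(7) _ _ st(2,4)])
    show "u + axis k (-c) \<in> L 1" by (rule L1I_code_plus[OF x ijk(4) st(1)]) (auto simp: u_def fun_eq_iff)
    show "u + axis i (-s) \<in> L 1" by (rule L1I_code_plus[OF x ijk(6) st(3)]) (auto simp: u_def fun_eq_iff)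
    show "u + axis j t \<in> L 1"
      by (rule L1I_plus_code[OF z(1) _ w ijk(7) st(4)]) (auto simp: u_def z(2) fun_eq_iff)
    show "u + axis l d \<in> L 1"
      by (rule L1I_plus_code[OF z(1) _ vert_add_axis[OF uv ijk(7)] ijk(5) st(2)])
        (auto simp: u_def z(2) fun_eq_iff)
  qed (use ijk ld st alpha_2_1 in auto)
qed

lemma code_beyond_diagonal:
  assumes x: "x \<in> C" and ij: "i \<noteq> j" "i < n" "j < n" and st: "\<bar>s\<bar> = 1" "\<bar>t\<bar> = 1"
  obtains k c l d where "k < n" "\<bar>c\<bar> = 1" "l < n" "\<bar>d\<bar> = 1"
    "(k, c) \<noteq> (j, -t)" "(k, c) \<noteq> (i, -s)"
    "(l, d) \<noteq> (k, -c)" "(l, d) \<noteq> (i, -s)" "(l, d) \<noteq> (j, -t)"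
    "x + axis i s + axis j t + axis k c + axis l d \<in> C"
proof -
  define u where "u = x + axis i s + axis j t"
  have u: "u \<in> L 2" unfolding u_def by (rule diagonal_in_L2[OF x ij st])
  let ?A = "{u + axis j (-t), u + axis i (-s)}"
  have "card ?A \<le> 2" by (rule card_insert_le_m1) auto
  hence "card ?A < \<alpha> 2 1" using alpha_2_1 by simp
  then obtain k c where kc: "k < n" "\<bar>c\<bar> = 1" "u + axis k c \<in> L 1" "u + axis k c \<notin> ?A"
    using exists_axis_nbr_outside[OF u rho_ge_2 one_le_rho _ \<open>card ?A < _\<close>] by blast
  have kc': "(k, c) \<noteq> (j, -t)" "(k, c) \<noteq> (i, -s)" using kc(4) by auto
  have "card ({} :: (nat \<Rightarrow> int) set) < \<alpha> 1 0" using alpha_1_0 by simp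
  then obtain l d where ld: "l < n" "\<bar>d\<bar> = 1" "u + axis k c + axis l d \<in> L 0"
    using exists_axis_nbr_outside[OF kc(3) one_le_rho le0 finite.emptyI] by blast
  define z where "z = x + axis i s + axis j t + axis k c + axis l d"
  have zC: "z \<in> C" using ld(3) L_0 by (simp add: z_def u_def)
  have "(l, d) \<noteq> (k, -c)"
  proof
    assume "(l, d) = (k, -c)"
    hence "z = u" using z_def by (auto simp: u_def fun_eq_iff)
    thus False using zC L2_disjoint_C[OF u] by simp
  qed
  moreover have "(l, d) \<noteq> (i, -s)"
  proof
    assume "(l, d) = (i, -s)"
    hence "z = x + axis j t + axis k c" using z_def by (auto simp: fun_eq_iff)
    thus False using no_code_at_dist_2[OF x zC _ ij(3) kc(1) st(2) kc(2)] kc' by auto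
  qed
  moreover have "(l, d) \<noteq> (j, -t)"
  proof
    assume "(l, d) = (j, -t)"
    hence "z = x + axis i s + axis k c" using z_def by (auto simp: fun_eq_iff)
    thus False using no_code_at_dist_2[OF x zC _ ij(2) kc(1) st(1) kc(2)] kc' by auto
  qed
  ultimately show ?thesis using that[OF kc(1,2) ld(1,2) kc'] zC z_def by blast
qed

lemma code_at_leap:
  assumes x: "x \<in> C" and ij: "i \<noteq> j" "i < n" "j < n" and st: "\<bar>s\<bar> = 1" "\<bar>t\<bar> = 1"
  shows "x + axis i (3 * s) + axis j t \<in> C \<or> x + axis j (3 * t) + axis i s \<in> C"
proof -
  obtain k c l d where kc: "k < n" "\<bar>c\<bar> = 1" "l < n" "\<bar>d\<bar> = 1"
    "(k, c) \<noteq> (j, -t)" "(k, c) \<noteq> (i, -s)"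
    and ld: "(l, d) \<noteq> (k, -c)" "(l, d) \<noteq> (i, -s)" "(l, d) \<noteq> (j, -t)"
    and z: "x + axis i s + axis j t + axis k c + axis l d \<in> C"
    using code_beyond_diagonal[OF x ij st] .
  have "c = s \<or> c = -s" "c = t \<or> c = -t" using kc(2) st by arith+
  then consider "k = i" "c = s" | "k = j" "c = t" | "k \<noteq> i" "k \<noteq> j" using kc(5,6) by auto
  thus ?thesis
  proof cases
    case 1
    have "x + axis i s + axis j t + axis i s + axis l d \<in> C" using z by (simp only: 1)
    hence "(l, d) = (i, s)" by (rule collinear_third_step[OF x ij kc(3) st kc(4) _ refl ld(2,3)])
    hence "x + axis i s + axis j t + axis k c + axis l d = x + axis i (3 * s) + axis j t"
      using 1 by (auto simp: fun_eq_iff)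
    with z show ?thesis by (simp only: simp_thms)
  next
    case 2
    have "x + axis j t + axis i s + axis j t + axis l d \<in> C"
      using z by (simp only: 2 add.commute add.left_commute)
    hence "(l, d) = (j, t)"
      by (rule collinear_third_step[OF x ij(1)[symmetric] ij(3,2) kc(3) st(2,1) kc(4) _ refl ld(3,2)])
    hence "x + axis i s + axis j t + axis k c + axis l d = x + axis j (3 * t) + axis i s"
      using 2 by (auto simp: fun_eq_iff)
    with z show ?thesis by (simp only: simp_thms)
  next
    case 3
    show ?thesis
    proof (cases "(l, d) = (j, t)")
      case False
      thus ?thesis using transverse_third_step[OF x ij(1) 3 ij(2,3) kc(1,3) st kc(2,4) z refl ld(1,2)] by blast
    next
      case True
      have "x + axis j t + axis i s + axis k c + axis l d \<in> C"
        using z by (simp only: add.commute add.left_commute)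
      moreover have "(l, d) \<noteq> (i, s)" using True ij(1) by simp
      ultimately show ?thesis
        using transverse_third_step[OF x ij(1)[symmetric] 3(2,1) ij(3,2) kc(1,3) st(2,1) kc(2,4) _ refl ld(1,3)]
        by blast
    qed
  qed
qed

lemma dim_le_2: "n \<le> 2"
proof (rule ccontr)
  assume n: "\<not> n \<le> 2"
  obtain x where x: "x \<in> C" using C_nonempty by blast
  \<comment> \<open>Each direction \<open>(j, t) \<in> T\<close> and \<open>(0, s)\<close> span a leap; at most one leap starts at
    \<open>(0, s)\<close>, so \<open>A s\<close> misses at most one element of \<open>T\<close>, yet \<open>A 1\<close> and \<open>A (-1)\<close> are disjoint.\<close>
  define T :: "(nat \<times> int) set" where "T = {1, 2} \<times> {1, -1}"
  define A where "A s = {(j, t) \<in> T. x + axis j (3 * t) + axis 0 s \<in> C}" for s :: int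
  have T: "j \<noteq> 0" "j < n" "\<bar>t\<bar> = 1" if "(j, t) \<in> T" for j t
    using that n by (auto simp: T_def)
  have finT: "finite T" and cardT: "card T = 4" by (simp_all add: T_def card_cartesian_product)
  have AT: "A s \<subseteq> T" for s by (auto simp: A_def)
  have finA: "finite (A s)" for s using finite_subset[OF AT finT] .
  have "card (T - A s) \<le> 1" if s: "\<bar>s\<bar> = 1" for s
  proof -
    have leap: "x + axis 0 (3 * s) + axis j t \<in> C" if "(j, t) \<in> T - A s" for j t
      using code_at_leap[OF x, of 0 j s t] s T[of j t] that n by (auto simp: A_def)
    have "p = q" if "p \<in> T - A s" "q \<in> T - A s" for p q
    proof -
      obtain j t j' t' where p: "p = (j, t)" and q: "q = (j', t')" by fastforce
      show ?thesis using code_nbr_unique[OF leap leap] T that unfolding p q by blast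
    qed
    thus ?thesis using finT by (simp add: card_le_Suc0_iff_eq)
  qed
  hence card_A: "3 \<le> card (A s)" if "\<bar>s\<bar> = 1" for s
    using that card_Diff_subset[OF finA AT] cardT by fastforce
  have "A 1 \<inter> A (-1) = {}"
  proof -
    have False if "(j, t) \<in> A 1" "(j, t) \<in> A (-1)" for j t
      using code_nbr_unique[of "x + axis j (3 * t)" 0 1 0 "-1"] that n by (auto simp: A_def)
    thus ?thesis by auto
  qed
  hence "card (A 1 \<union> A (-1)) = card (A 1) + card (A (-1))" using card_Un_disjoint[OF finA finA] by blast
  also have "\<dots> \<ge> 6" using card_A[of 1] card_A[of "-1"] by simp
  moreover have "card (A 1 \<union> A (-1)) \<le> 4" using card_mono[OF finT] AT cardT by (metis Un_least)
  ultimately show False by simp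
qed

lemma dim_eq_2: "n = 2"
  using dim_le_2 alpha_2_1_le alpha_2_1 by simp

lemma code_min_dist:
  assumes x: "x \<in> C" and y: "y \<in> C" and "x \<noteq> y"
  shows "4 \<le> gdist n x y"
proof (rule ccontr)
  assume "\<not> 4 \<le> gdist n x y"
  moreover have xv: "x \<in> vert n" and yv: "y \<in> vert n" using x y C_subset_vert by auto
  moreover have "gdist n x y \<noteq> 0" using gdist_eq_0_iff[OF xv yv] \<open>x \<noteq> y\<close> by simp
  moreover have "gdist n x y \<noteq> 1"
  proof
    assume "gdist n x y = 1"
    hence "y \<in> L 1" using code_nbr_in_L1[OF x yv] by (simp add: adj_iff_gdist)
    thus False using y L_0 by (metis mem_L zero_neq_one)
  qed
  moreover have "gdist n x y \<noteq> 2"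
  proof
    assume "gdist n x y = 2"
    then obtain p where p: "p \<in> vert n" "adj n x p" "gdist n p y = 1"
      using gdist_step_towards[OF xv yv, of 1] by auto
    have "{x, y} \<subseteq> nbrs n p \<inter> C"
      using x y xv yv p by (auto simp: nbrs_def adj_iff_gdist gdist_sym)
    hence "card {x, y} \<le> 1"
      using card_code_nbrs_le[OF code_nbr_in_L1[OF x p(1,2)]] alpha_1_0 by simp
    thus False using \<open>x \<noteq> y\<close> by simp
  qed
  moreover have "gdist n x y \<noteq> 3"
  proof
    assume "gdist n x y = 3"
    then obtain p where p: "p \<in> vert n" "adj n x p" "gdist n p y = 2"
      using gdist_step_towards[OF xv yv, of 2] by auto
    then obtain q where q: "q \<in> vert n" "adj n p q" "gdist n q y = 1"
      using gdist_step_towards[OF p(1) yv, of 1] by auto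
    have "q \<in> L 1" using code_nbr_in_L1[OF y q(1)] q(3) by (simp add: adj_iff_gdist gdist_sym)
    thus False using L1_nbr_notin_L1[OF code_nbr_in_L1[OF x p(1,2)] q(2)] by simp
  qed
  ultimately show False by linarith
qed

end

lemma pinwheel_covers_sphere:
  fixes a b \<sigma> :: int
  assumes "\<bar>a\<bar> + \<bar>b\<bar> = 4" "\<bar>\<sigma>\<bar> = 1"
  shows "\<bar>a - 3\<bar> + \<bar>b - \<sigma>\<bar> \<le> 2 \<or> \<bar>a + 1\<bar> + \<bar>b - 3 * \<sigma>\<bar> \<le> 2 \<or>
    \<bar>a + 3\<bar> + \<bar>b + \<sigma>\<bar> \<le> 2 \<or> \<bar>a - 1\<bar> + \<bar>b + 3 * \<sigma>\<bar> \<le> 2"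
proof -
  have "\<sigma> = 1 \<or> \<sigma> = -1" using assms(2) by arith
  thus ?thesis using assms(1) by (elim disjE) (smt (verit))+
qed

lemma pinwheel_centre_far:
  fixes a b \<sigma> :: int
  assumes "\<bar>\<sigma>\<bar> = 1" "\<bar>a + 1\<bar> + \<bar>b + 2 * \<sigma>\<bar> \<le> 2"
  shows "\<bar>a\<bar> + \<bar>b\<bar> \<le> 3 \<or> \<bar>a + 3\<bar> + \<bar>b + \<sigma>\<bar> \<le> 3 \<or> \<bar>a - 1\<bar> + \<bar>b + 3 * \<sigma>\<bar> \<le> 3"
proof -
  have "\<sigma> = 1 \<or> \<sigma> = -1" using assms(1) by arith
  thus ?thesis using assms(2) by (elim disjE) (smt (verit))+
qed

locale crc_1_3_plane = crc_1_3 +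
  assumes dim_2: "n = 2"
begin

lemma pinwheel:
  assumes x: "x \<in> C"
  obtains \<sigma> where "\<bar>\<sigma>\<bar> = 1"
    "x + axis 0 3 + axis 1 \<sigma> \<in> C" "x + axis 0 (-1) + axis 1 (3 * \<sigma>) \<in> C"
    "x + axis 0 (-3) + axis 1 (-\<sigma>) \<in> C" "x + axis 0 1 + axis 1 (-3 * \<sigma>) \<in> C"
proof -
  have m: "0 < n" "1 < n" using dim_2 by auto
  define R where "R s t \<longleftrightarrow> x + axis 0 (3 * s) + axis 1 t \<in> C" for s t :: int
  define S where "S t s \<longleftrightarrow> x + axis 1 (3 * t) + axis 0 s \<in> C" for s t :: int
  have leap: "R s t \<or> S t s" if "\<bar>s\<bar> = 1" "\<bar>t\<bar> = 1" for s t
    using code_at_leap[OF x _ m that] by (simp add: R_def S_def)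
  have R_unique: "\<not> (R s 1 \<and> R s (-1))" for s
    using code_nbr_unique[of "x + axis 0 (3 * s)" 1 1 1 "-1"] m by (auto simp: R_def)
  have S_unique: "\<not> (S t 1 \<and> S t (-1))" for t
    using code_nbr_unique[of "x + axis 1 (3 * t)" 0 1 0 "-1"] m by (auto simp: S_def)
  have "(R 1 1 \<and> S 1 (-1) \<and> R (-1) (-1) \<and> S (-1) 1) \<or> (R 1 (-1) \<and> S (-1) (-1) \<and> R (-1) 1 \<and> S 1 1)"
    using leap[of 1 1] leap[of 1 "-1"] leap[of "-1" 1] leap[of "-1" "-1"]
      R_unique[of 1] R_unique[of "-1"] S_unique[of 1] S_unique[of "-1"] by auto
  thus ?thesis
  proof
    assume "R 1 1 \<and> S 1 (-1) \<and> R (-1) (-1) \<and> S (-1) 1"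
    thus ?thesis using that[of 1] by (simp add: R_def S_def algebra_simps)
  next
    assume "R 1 (-1) \<and> S (-1) (-1) \<and> R (-1) 1 \<and> S 1 1"
    thus ?thesis using that[of "-1"] by (simp add: R_def S_def algebra_simps)
  qed
qed

lemma no_vertex_at_dcode_4: "v \<in> vert n \<Longrightarrow> dcode n C v \<noteq> 4"
proof
  assume v: "v \<in> vert n" and d: "dcode n C v = 4"
  obtain z where z: "z \<in> C" "dcode n C v = gdist n v z" using dcode_attained[OF C_nonempty] .
  obtain \<sigma> where s: "\<bar>\<sigma>\<bar> = 1" and c: "z + axis 0 3 + axis 1 \<sigma> \<in> C" "z + axis 0 (-1) + axis 1 (3 * \<sigma>) \<in> C"
     "z + axis 0 (-3) + axis 1 (-\<sigma>) \<in> C" "z + axis 0 1 + axis 1 (-3 * \<sigma>) \<in> C"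
    using pinwheel[OF z(1)] .
  have "\<bar>v 0 - z 0\<bar> + \<bar>v 1 - z 1\<bar> = 4" using z d by (simp add: dim_2 gdist_2)
  from pinwheel_covers_sphere[OF this s]
  have "gdist n v (z + axis 0 3 + axis 1 \<sigma>) \<le> 2 \<or> gdist n v (z + axis 0 (-1) + axis 1 (3 * \<sigma>)) \<le> 2 \<or>
      gdist n v (z + axis 0 (-3) + axis 1 (-\<sigma>)) \<le> 2 \<or> gdist n v (z + axis 0 1 + axis 1 (-3 * \<sigma>)) \<le> 2"
    by (simp add: dim_2 gdist_2 nat_le_iff algebra_simps)
  thus False using dcode_le[OF c(1), of n v] dcode_le[OF c(2), of n v] dcode_le[OF c(3), of n v]
    dcode_le[OF c(4), of n v] d by linarith
qed

lemma pinwheel_centre_in_L3: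
  assumes x: "x \<in> C" and s: "\<bar>\<sigma>\<bar> = 1"
    and c: "x + axis 0 3 + axis 1 \<sigma> \<in> C" "x + axis 0 (-1) + axis 1 (3 * \<sigma>) \<in> C"
  shows "x + axis 0 1 + axis 1 (2 * \<sigma>) \<in> L 3"
proof -
  define v where "v = x + axis 0 1 + axis 1 (2 * \<sigma>)"
  have vv: "v \<in> vert n" using x C_subset_vert dim_2 by (auto simp: v_def intro!: vert_add_axis)
  have "3 \<le> dcode n C v"
  proof (rule ccontr)
    assume "\<not> 3 \<le> dcode n C v"
    moreover obtain y where y: "y \<in> C" "dcode n C v = gdist n v y"
      using dcode_attained[OF C_nonempty] .
    ultimately have vy: "gdist n v y \<le> 2" by simp
    have far: "4 \<le> gdist n c y" if "c \<in> C" "gdist n v c = 3" for c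
      using code_min_dist[OF that(1) y(1)] that vy by fastforce
    have "4 \<le> gdist n x y" by (rule far[OF x]) (use s in \<open>auto simp: dim_2 gdist_2 v_def\<close>)
    moreover have "4 \<le> gdist n (x + axis 0 3 + axis 1 \<sigma>) y"
      by (rule far[OF c(1)]) (use s in \<open>auto simp: dim_2 gdist_2 v_def\<close>)
    moreover have "4 \<le> gdist n (x + axis 0 (-1) + axis 1 (3 * \<sigma>)) y"
      by (rule far[OF c(2)]) (use s in \<open>auto simp: dim_2 gdist_2 v_def\<close>)
    ultimately have "\<not> \<bar>x 0 - y 0\<bar> + \<bar>x 1 - y 1\<bar> \<le> 3" "\<not> \<bar>x 0 - y 0 + 3\<bar> + \<bar>x 1 - y 1 + \<sigma>\<bar> \<le> 3"
       "\<not> \<bar>x 0 - y 0 - 1\<bar> + \<bar>x 1 - y 1 + 3 * \<sigma>\<bar> \<le> 3"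
      by (simp_all add: dim_2 gdist_2 le_nat_iff algebra_simps)
    moreover have "\<bar>x 0 - y 0 + 1\<bar> + \<bar>x 1 - y 1 + 2 * \<sigma>\<bar> \<le> 2"
      using vy by (simp add: dim_2 gdist_2 v_def nat_le_iff algebra_simps)
    ultimately show False using pinwheel_centre_far[OF s] by blast
  qed
  moreover have "dcode n C v \<le> 3" using dcode_le[OF x, of n v] s by (auto simp: dim_2 gdist_2 v_def)
  ultimately show ?thesis using vv by (simp add: mem_L v_def)
qed

lemma rho_eq_3: "\<rho> = 3"
proof -
  have "\<rho> \<le> 3"
  proof (rule ccontr)
    assume "\<not> \<rho> \<le> 3"
    then obtain v where "v \<in> L 4" using layer_nonempty[of 4] by auto
    thus False using no_vertex_at_dcode_4 unfolding mem_L by blast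
  qed
  moreover obtain x where x: "x \<in> C" using C_nonempty by blast
  then obtain \<sigma> where "\<bar>\<sigma>\<bar> = 1" "x + axis 0 3 + axis 1 \<sigma> \<in> C" "x + axis 0 (-1) + axis 1 (3 * \<sigma>) \<in> C"
    using pinwheel by metis
  hence "3 \<le> \<rho>" using pinwheel_centre_in_L3[OF x] dcode_le_rho by (metis mem_L)
  ultimately show ?thesis by simp
qed

lemma alpha_0_1: "\<alpha> 0 1 = 4"
proof -
  obtain x where x: "x \<in> C" using C_nonempty by blast
  hence "x \<in> L 0" "x \<in> vert 2" using L_0 C_subset_vert dim_2 by auto
  moreover have "nbrs n x \<inter> L 1 = nbrs n x" using code_nbr_in_L1[OF x] by (auto simp: nbrs_def)
  ultimately show ?thesis using card_nbrs_L[of x 0 1] card_nbrs_2 one_le_rho dim_2 by simp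
qed

lemma alpha_1_2: "\<alpha> 1 2 = 3"
proof -
  obtain x where x: "x \<in> C" using C_nonempty by blast
  have m: "0 < n" "1 < n" using dim_2 by auto
  define w where "w = x + axis 0 1"
  have wL: "w \<in> L 1" using L1I_code_plus[OF x m(1)] by (simp add: w_def)
  have "w \<in> vert n" using wL by (simp add: mem_L)
  hence wv: "w \<in> vert 2" using dim_2 by simp
  have "w + axis 0 1 \<notin> C" using no_code_at_dist_2[OF x _ _ m(1) m(1), of _ 1 1] by (auto simp: w_def)
  hence "w + axis 0 1 \<in> L 2"
    using L2I[OF wL vert_add_axis[OF _ m(1)] adj_add_axis[OF m(1)]] \<open>w \<in> vert n\<close> by simp
  moreover have "w + axis 1 1 \<in> L 2" "w + axis 1 (-1) \<in> L 2"
    using diagonal_in_L2[OF x _ m] by (simp_all add: w_def)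
  moreover have "w + axis 0 (-1) = x" by (auto simp: w_def fun_eq_iff)
  hence "w + axis 0 (-1) \<notin> L 2" using L2_disjoint_C x by auto
  ultimately have "nbrs n w \<inter> L 2 = {w + axis 0 1, w + axis 1 1, w + axis 1 (-1)}"
    using nbrs_2[OF wv, of 1] dim_2 by auto
  moreover have "card {w + axis 0 1, w + axis 1 1, w + axis 1 (-1)} = 3"
  proof -
    have "w + axis 0 1 \<noteq> w + axis 1 1" "w + axis 0 1 \<noteq> w + axis 1 (-1)" "w + axis 1 1 \<noteq> w + axis 1 (-1)"
      by (rule add_axis_neq; simp)+
    thus ?thesis by simp
  qed
  ultimately show ?thesis using card_nbrs_L[OF wL, of 2] rho_eq_3 by simp
qed

lemma alpha_row_2: "\<alpha> 2 2 = 0 \<and> \<alpha> 2 3 = 1"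
proof -
  obtain x where x: "x \<in> C" using C_nonempty by blast
  then obtain \<sigma> where s: "\<bar>\<sigma>\<bar> = 1" and c: "x + axis 0 3 + axis 1 \<sigma> \<in> C" "x + axis 0 (-1) + axis 1 (3 * \<sigma>) \<in> C"
    using pinwheel by metis
  have m: "0 < n" "1 < n" using dim_2 by auto
  define u where "u = x + axis 0 1 + axis 1 \<sigma>"
  have uL: "u \<in> L 2" using diagonal_in_L2[OF x _ m abs_one s] by (simp add: u_def)
  hence "u \<in> vert n" by (simp add: mem_L)
  hence nbrs_u: "nbrs n u = {u + axis 0 1, u + axis 0 (-1), u + axis 1 \<sigma>, u + axis 1 (-\<sigma>)}"
    using nbrs_2[OF _ s] dim_2 by simp
  have "u + axis 0 1 \<in> L 1"
    by (rule L1I_plus_code[OF c(1) _ vert_add_axis[OF \<open>u \<in> vert n\<close> m(1)] m(1), of 1])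
      (auto simp: u_def fun_eq_iff)
  moreover have "u + axis 0 (-1) \<in> L 1" by (rule L1I_code_plus[OF x m(2) s]) (auto simp: u_def fun_eq_iff)
  moreover have "u + axis 1 (-\<sigma>) \<in> L 1" by (rule L1I_code_plus[OF x m(1), of 1]) (auto simp: u_def fun_eq_iff)
  moreover have "u + axis 1 \<sigma> \<in> L 3"
    using pinwheel_centre_in_L3[OF x s c] by (simp add: u_def add.assoc axis_add)
  ultimately have "nbrs n u \<inter> L 2 = {}" "nbrs n u \<inter> L 3 = {u + axis 1 \<sigma>}"
    unfolding nbrs_u by (auto simp: mem_L)
  thus ?thesis using card_nbrs_L[OF uL, of 2] card_nbrs_L[OF uL, of 3] rho_eq_3 by simp
qed

lemma alpha_row_3: "\<alpha> 3 2 = 4 \<and> \<alpha> 3 3 = 0"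
proof -
  obtain x where x: "x \<in> C" using C_nonempty by blast
  then obtain \<sigma> where s: "\<bar>\<sigma>\<bar> = 1" and c: "x + axis 0 3 + axis 1 \<sigma> \<in> C" "x + axis 0 (-1) + axis 1 (3 * \<sigma>) \<in> C"
    using pinwheel by metis
  have m: "0 < n" "1 < n" using dim_2 by auto
  define v where "v = x + axis 0 1 + axis 1 (2 * \<sigma>)"
  have vL: "v \<in> L 3" using pinwheel_centre_in_L3[OF x s c] by (simp add: v_def)
  hence vv: "v \<in> vert n" by (simp add: mem_L)
  hence nbrs_v: "nbrs n v = {v + axis 0 1, v + axis 0 (-1), v + axis 1 \<sigma>, v + axis 1 (-\<sigma>)}"
    using nbrs_2[OF _ s] dim_2 by simp
  have "v + axis 0 1 \<in> L 2"
    by (rule L_nbr_below[of v 2, OF _ adj_add_axis[OF m(1)] vert_add_axis[OF vv m(1)] c(1)])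
      (use vL s in \<open>auto simp: dim_2 gdist_2 v_def\<close>)
  moreover have "v + axis 0 (-1) \<in> L 2"
    by (rule L_nbr_below[of v 2, OF _ adj_add_axis[OF m(1)] vert_add_axis[OF vv m(1)] x])
      (use vL s in \<open>auto simp: dim_2 gdist_2 v_def\<close>)
  moreover have "v + axis 1 \<sigma> \<in> L 2"
    by (rule L_nbr_below[of v 2, OF _ adj_add_axis[OF m(2) s] vert_add_axis[OF vv m(2)] c(2)])
      (use vL s in \<open>auto simp: dim_2 gdist_2 v_def\<close>)
  moreover have "v + axis 1 (-\<sigma>) \<in> L 2"
    using diagonal_in_L2[OF x _ m abs_one s] by (simp add: v_def add.assoc axis_add)
  ultimately have "nbrs n v \<inter> L 2 = nbrs n v" "nbrs n v \<inter> L 3 = {}"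
    unfolding nbrs_v by (auto simp: mem_L)
  moreover have "card (nbrs n v) = 4" using card_nbrs_2 vv dim_2 by simp
  ultimately show ?thesis using card_nbrs_L[OF vL, of 2] card_nbrs_L[OF vL, of 3] rho_eq_3 by simp
qed

lemma parameter_matrix: "matrix_0413 \<rho> \<alpha>"
  using rho_eq_3 alpha_0_0 alpha_0_1 alpha_1_0 alpha_1_1 alpha_1_2 alpha_2_1 alpha_row_2 alpha_row_3
  by (simp add: matrix_0413_def)

end

section \<open>Parameters \<open>c\<^sub>1 = 2\<close>, \<open>c\<^sub>2 = 3\<close>\<close>

locale crc_2_3 = null2_crc +
  assumes alpha_1_0: "\<alpha> 1 0 = 2" and alpha_2_1: "\<alpha> 2 1 = 3"
begin

lemma second_code_nbr:
  assumes v: "v \<in> L 1"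
  obtains l d where "l < n" "\<bar>d\<bar> = 1" "v + axis l d \<in> C" "v + axis l d \<noteq> x"
proof -
  have "card {x} < \<alpha> 1 0" using alpha_1_0 by simp
  then obtain l d where "l < n" "\<bar>d\<bar> = 1" "v + axis l d \<in> L 0" "v + axis l d \<notin> {x}"
    using exists_axis_nbr_outside[OF v one_le_rho le0 _ \<open>card {x} < _\<close>] by blast
  thus ?thesis using that L_0 by blast
qed

lemma L1_code_nbrs_not_singleton:
  assumes "w \<in> L 1" "nbrs n w \<inter> C \<subseteq> {z}"
  shows False
proof -
  have "card (nbrs n w \<inter> C) = 2" using card_nbrs_L[OF assms(1) one_le_rho le0] alpha_1_0 L_0 by simp
  moreover have "card (nbrs n w \<inter> C) \<le> card {z}" using assms(2) by (intro card_mono) auto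
  ultimately show False by simp
qed

lemma no_three_code_nbrs:
  assumes "v \<in> L 1" "a \<in> C" "b \<in> C" "c \<in> C" "adj n v a" "adj n v b" "adj n v c"
    and "a \<noteq> b" "a \<noteq> c" "b \<noteq> c"
  shows False
proof -
  have "{a, b, c} \<subseteq> nbrs n v \<inter> C" using assms C_subset_vert by (auto simp: nbrs_def)
  from card_code_nbrs_le[OF assms(1) this] assms(8-10) alpha_1_0 show False by simp
qed

lemma code_pair_across:
  assumes x: "x \<in> C" and ij: "i \<noteq> j" "i < n" "j < n" and s: "\<bar>s\<bar> = 1"
    and "x + axis j 1 + axis i s \<in> C" "x + axis j (-1) + axis i s \<in> C"
  shows False
proof (rule no_three_code_nbrs[OF L1I_code_plus[OF x ij(2) s refl] x assms(6,7)])
  show "adj n (x + axis i s) x" using adj_add_axis'[OF ij(2) s] .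
  show "adj n (x + axis i s) (x + axis j 1 + axis i s)" "adj n (x + axis i s) (x + axis j (-1) + axis i s)"
    using adj_add_axis[OF ij(3), of _ "x + axis i s"] by (simp_all add: algebra_simps)
  show "x \<noteq> x + axis j 1 + axis i s" "x \<noteq> x + axis j (-1) + axis i s"
    "x + axis j 1 + axis i s \<noteq> x + axis j (-1) + axis i s"
    using ij(1) by (auto simp: fun_eq_iff dest: spec[of _ j])
qed

lemma no_third_code_nbr:
  assumes x: "x \<in> C" and idx: "i < n" "j < n" "l < n" "j \<noteq> i" "j \<noteq> l"
    and st: "\<bar>s\<bar> = 1" "\<bar>t\<bar> = 1" "\<bar>d\<bar> = 1" and ld: "(l, d) \<noteq> (i, -s)"
    and y: "x + axis i s + axis l d \<in> C" and z: "x + axis i s + axis j t \<in> C"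
  shows False
proof (rule no_three_code_nbrs[OF L1I_code_plus[OF x idx(1) st(1) refl] x y z])
  show "adj n (x + axis i s) x" using adj_add_axis'[OF idx(1) st(1)] .
  show "adj n (x + axis i s) (x + axis i s + axis l d)" using adj_add_axis[OF idx(3) st(3)] .
  show "adj n (x + axis i s) (x + axis i s + axis j t)" using adj_add_axis[OF idx(2) st(2)] .
  have "s \<noteq> 0" "d \<noteq> 0" using st by auto
  thus "x \<noteq> x + axis i s + axis l d" "x \<noteq> x + axis i s + axis j t"
    using add_two_axes_neq[of s l d i x] add_two_axes_neq[of s j t i x] ld idx(4) by auto
  show "x + axis i s + axis l d \<noteq> x + axis i s + axis j t"
    using add_axis_neq[of d l j t "x + axis i s"] \<open>d \<noteq> 0\<close> idx(5) by auto
qed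

lemma diagonal_beside_code_in_L2:
  assumes x: "x \<in> C" and idx: "i < n" "j < n" "l < n" "j \<noteq> i" "j \<noteq> l"
    and st: "\<bar>s\<bar> = 1" "\<bar>t\<bar> = 1" "\<bar>d\<bar> = 1" and ld: "(l, d) \<noteq> (i, -s)"
    and y: "x + axis i s + axis l d \<in> C"
  shows "x + axis i s + axis j t \<in> L 2"
proof (rule L2I[OF L1I_code_plus[OF x idx(1) st(1) refl]])
  show "x + axis i s + axis j t \<in> vert n" using x C_subset_vert idx by (auto intro!: vert_add_axis)
  show "adj n (x + axis i s) (x + axis i s + axis j t)" using adj_add_axis[OF idx(2) st(2)] .
  show "x + axis i s + axis j t \<notin> C" using no_third_code_nbr[OF assms] by blast
qed

lemma transverse_code:
  assumes x: "x \<in> C" and idx: "i < n" "j < n" "l < n" "j \<noteq> i" "j \<noteq> l"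
    and st: "\<bar>s\<bar> = 1" "\<bar>t\<bar> = 1" "\<bar>d\<bar> = 1" and ld: "(l, d) \<noteq> (i, -s)"
    and y: "x + axis i s + axis l d \<in> C"
  shows "x + axis j t + axis i (-s) \<in> C"
proof (rule ccontr)
  assume opposite: "x + axis j t + axis i (-s) \<notin> C"
  define u where "u = x + axis i s + axis j t"
  have u: "u \<in> L 2" unfolding u_def by (rule diagonal_beside_code_in_L2[OF assms])
  hence uv: "u \<in> vert n" by (simp add: mem_L)
  have xj: "x + axis j t \<in> L 1" using L1I_code_plus[OF x idx(2) st(2) refl] .
  obtain m g where mg: "m < n" "\<bar>g\<bar> = 1" "x + axis j t + axis m g \<in> C" "x + axis j t + axis m g \<noteq> x"
    using second_code_nbr[OF xj, of x] .
  have n1: "(m, g) \<noteq> (j, -t)"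
  proof
    assume "(m, g) = (j, -t)"
    hence "x + axis j t + axis m g = x" by (auto simp: fun_eq_iff)
    with mg(4) show False by simp
  qed
  have n2: "(m, g) \<noteq> (i, -s)" using mg(3) opposite by auto
  have n3: "(m, g) \<noteq> (l, d)"
  proof
    assume "(m, g) = (l, d)"
    hence z': "x + axis l d + axis j t \<in> C" using mg(3) by (simp add: algebra_simps)
    have y': "x + axis l d + axis i s \<in> C" using y by (simp add: algebra_simps)
    have "(i, s) \<noteq> (l, -d)" using ld st by auto
    from no_third_code_nbr[OF x idx(3,2,1) idx(5,4) st(3,2,1) this y' z'] show False .
  qed
  show False
  proof (rule no_four_L1_nbrs[OF u _ idx(2,1,3) mg(1) _ _ st(3) mg(2)])
    show "u + axis j (-t) \<in> L 1" by (rule L1I_code_plus[OF x idx(1) st(1)]) (auto simp: u_def fun_eq_iff)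
    show "u + axis i (-s) \<in> L 1" by (rule L1I_code_plus[OF x idx(2) st(2)]) (auto simp: u_def fun_eq_iff)
    show "u + axis l d \<in> L 1"
      by (rule L1I_plus_code[where s = "-t", OF y _ vert_add_axis[OF uv idx(3)] idx(2)])
        (auto simp: u_def fun_eq_iff st(2))
    show "u + axis m g \<in> L 1"
      by (rule L1I_plus_code[where s = "-s", OF mg(3) _ vert_add_axis[OF uv mg(1)] idx(1)])
        (auto simp: u_def fun_eq_iff st(1))
  qed (use n1 n2 n3 idx(4,5) ld st alpha_2_1 in auto)
qed

lemma no_code_at_axis_dist_2:
  assumes x: "x \<in> C" and ij: "i \<noteq> j" "i < n" "j < n" and s: "\<bar>s\<bar> = 1"
    and "x + axis i (2 * s) \<in> C"
  shows False
proof -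
  have "x + axis i s + axis i s = x + axis i (2 * s)" by (auto simp: fun_eq_iff)
  with assms(6) have y: "x + axis i s + axis i s \<in> C" by (simp only:)
  have "(i, s) \<noteq> (i, -s)" using s by simp
  hence "x + axis j t + axis i (-s) \<in> C" if "\<bar>t\<bar> = 1" for t
    using transverse_code[OF x ij(2,3,2) ij(1)[symmetric] ij(1)[symmetric] s that s _ y] by blast
  moreover have "\<bar>-s\<bar> = 1" using s by simp
  ultimately show False using code_pair_across[OF x ij, of "-s"] by (metis abs_1 abs_minus)
qed

lemma transverse_second_code_nbr:
  assumes x: "x \<in> C" and i: "i < n" and s: "\<bar>s\<bar> = 1" and j: "j < n" "j \<noteq> i"
  obtains l d where "l < n" "l \<noteq> i" "\<bar>d\<bar> = 1" "x + axis i s + axis l d \<in> C"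
proof -
  obtain l d where ld: "l < n" "\<bar>d\<bar> = 1" "x + axis i s + axis l d \<in> C" "x + axis i s + axis l d \<noteq> x"
    using second_code_nbr[OF L1I_code_plus[OF x i s refl], of x] .
  have "l \<noteq> i"
  proof
    assume "l = i"
    have "d \<noteq> -s"
    proof
      assume "d = -s"
      hence "x + axis i s + axis l d = x" using \<open>l = i\<close> by (auto simp: fun_eq_iff)
      with ld(4) show False ..
    qed
    hence "d = s" using ld(2) s by arith
    hence "x + axis i s + axis l d = x + axis i (2 * s)" using \<open>l = i\<close> by (auto simp: fun_eq_iff)
    with ld(3) have "x + axis i (2 * s) \<in> C" by (simp only:)
    thus False using no_code_at_axis_dist_2[OF x j(2)[symmetric] i j(1) s] by blast
  qed
  thus ?thesis using that ld by blast
qed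

lemma dim_le_2: "n \<le> 2"
proof (rule ccontr)
  assume "\<not> n \<le> 2"
  hence m: "0 < n" "1 < n" "2 < n" by auto
  obtain x where x: "x \<in> C" using C_nonempty by blast
  obtain l d where ld: "l < n" "l \<noteq> 0" "\<bar>d\<bar> = 1" "x + axis 0 1 + axis l d \<in> C"
    using transverse_second_code_nbr[OF x m(1) abs_one m(2)] by auto
  obtain k where k: "k < n" "k \<noteq> 0" "k \<noteq> l"
  proof (cases "l = 1")
    case True
    thus ?thesis using that[of 2] m by simp
  next
    case False
    thus ?thesis using that[of 1] m by simp
  qed
  have "x + axis k c + axis 0 (-1) \<in> C" if "\<bar>c\<bar> = 1" for c
    using transverse_code[OF x m(1) k(1) ld(1) k(2,3) abs_one that ld(3) _ ld(4)] ld(2) by auto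
  thus False using code_pair_across[OF x k(2)[symmetric] m(1) k(1), of "-1"] by auto
qed

lemma far_diagonal_code:
  assumes dim: "n = 2" and x: "x \<in> C" and d: "\<bar>d\<bar> = 1" and q: "x + axis 0 1 + axis 1 (-d) \<in> L 2"
  shows "x + axis 0 2 + axis 1 (-2 * d) \<in> C"
proof (rule ccontr)
  assume p: "x + axis 0 2 + axis 1 (-2 * d) \<notin> C"
  have m: "0 < n" "1 < n" and ij: "(0::nat) \<noteq> 1" using dim by auto
  have nd: "\<bar>-d\<bar> = 1" using d by simp
  define u where "u = x + axis 0 1 + axis 1 (-d)"
  have "u \<in> vert n" using q by (simp add: u_def mem_L)
  hence uv: "u \<in> vert 2" using dim by simp
  have u_not: "u \<notin> C" using L2_disjoint_C[OF q] by (simp add: u_def)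
  have x2: "x + axis 0 2 \<notin> C"
    using no_code_at_axis_dist_2[OF x ij m abs_one, unfolded mult.right_neutral] by blast
  have x2': "x + axis 1 (2 * -d) \<notin> C"
    using no_code_at_axis_dist_2[OF x ij[symmetric] m(2,1) nd] by blast
  have "card {u + axis 1 d, u + axis 0 (-1)} \<le> 2" by (rule card_insert_le_m1) auto
  hence card_A: "card {u + axis 1 d, u + axis 0 (-1)} < \<alpha> 2 1" using alpha_2_1 by simp
  obtain w where w: "w \<in> nbrs n u \<inter> L 1" "w \<notin> {u + axis 1 d, u + axis 0 (-1)}"
    using exists_nbr_outside[OF q[folded u_def] rho_ge_2 one_le_rho _ card_A] by blast
  have wL: "w \<in> L 1" and "w \<in> vert n" using w(1) by (simp_all add: nbrs_def)
  hence wv: "w \<in> vert 2" using dim by simp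
  have w_cases: "w = u + axis 0 1 \<or> w = u + axis 1 (-d)"
    using w nbrs_2[OF uv d] dim by auto
  have "nbrs n w \<inter> C \<subseteq> {w + axis 0 1} \<or> nbrs n w \<inter> C \<subseteq> {w + axis 1 (-d)}"
  proof (cases "w = u + axis 0 1")
    case True
    hence "w + axis 0 (-1) = u" "w + axis 1 d = x + axis 0 2" "w + axis 1 (-d) = x + axis 0 2 + axis 1 (-2 * d)"
      by (auto simp: u_def fun_eq_iff)
    hence "nbrs 2 w \<inter> C \<subseteq> {w + axis 0 1}" using nbrs_2[OF wv d] u_not x2 p by auto
    thus ?thesis using dim by simp
  next
    case False
    hence "w = u + axis 1 (-d)" using w_cases by simp
    hence "w + axis 1 d = u" "w + axis 0 (-1) = x + axis 1 (2 * -d)" "w + axis 0 1 = x + axis 0 2 + axis 1 (-2 * d)"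
      by (auto simp: u_def fun_eq_iff)
    hence "nbrs 2 w \<inter> C \<subseteq> {w + axis 1 (-d)}" using nbrs_2[OF wv d] u_not x2' p by auto
    thus ?thesis using dim by simp
  qed
  thus False using L1_code_nbrs_not_singleton[OF wL] by blast
qed

lemma dim_ne_2: "n \<noteq> 2"
proof
  assume dim: "n = 2"
  hence m: "0 < n" "1 < n" by auto
  obtain x where x: "x \<in> C" using C_nonempty by blast
  obtain l d where ld: "l < n" "l \<noteq> 0" "\<bar>d\<bar> = 1" "x + axis 0 1 + axis l d \<in> C"
    using transverse_second_code_nbr[OF x m(1) abs_one m(2)] by auto
  have "l = 1" using ld(1,2) dim by simp
  hence y: "x + axis 0 1 + axis 1 d \<in> C" using ld(4) by simp
  have nd: "\<bar>-d\<bar> = 1" using ld(3) by simp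
  define q where "q = x + axis 0 1 + axis 1 (-d)"
  have qv: "q \<in> vert n" using x C_subset_vert m by (auto simp: q_def intro!: vert_add_axis)
  have xL: "x + axis 0 1 \<in> L 1" using L1I_code_plus[OF x m(1) abs_one refl] .
  have adj_q: "adj n (x + axis 0 1) q" using adj_add_axis[OF m(2) nd] by (simp add: q_def)
  have "q \<notin> C"
  proof
    assume "q \<in> C"
    show False
    proof (rule no_three_code_nbrs[OF xL x y \<open>q \<in> C\<close> adj_add_axis'[OF m(1) abs_one]
          adj_add_axis[OF m(2) ld(3)] adj_q])
      show "x \<noteq> x + axis 0 1 + axis 1 d" using add_two_axes_neq[of 1 1 d 0 x] by auto
      show "x \<noteq> q" using add_two_axes_neq[of 1 1 "-d" 0 x] by (auto simp: q_def)
      show "x + axis 0 1 + axis 1 d \<noteq> q"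
        using add_axis_neq[of d 1 1 "-d" "x + axis 0 1"] ld(3) by (auto simp: q_def)
    qed
  qed
  hence q: "q \<in> L 2" using L2I[OF xL qv adj_q] by blast
  have "q + axis 0 1 + axis 1 (-d) = x + axis 0 2 + axis 1 (-2 * d)" by (auto simp: q_def fun_eq_iff)
  with far_diagonal_code[OF dim x ld(3) q[unfolded q_def]] have p: "q + axis 0 1 + axis 1 (-d) \<in> C"
    by (simp only:)
  show False
  proof (rule no_four_L1_nbrs[OF q _ m(2) m(1) m(1) m(2) ld(3) _ abs_one nd])
    show "q + axis 1 d \<in> L 1" by (rule L1I_code_plus[OF x m(1) abs_one]) (auto simp: q_def fun_eq_iff)
    show "q + axis 0 (-1) \<in> L 1" by (rule L1I_code_plus[OF x m(2) nd]) (auto simp: q_def fun_eq_iff)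
    show "q + axis 0 1 \<in> L 1" by (rule L1I_plus_code[OF p refl vert_add_axis[OF qv m(1)] m(2) nd])
    show "q + axis 1 (-d) \<in> L 1"
      by (rule L1I_plus_code[OF p _ vert_add_axis[OF qv m(2)] m(1) abs_one]) (simp add: algebra_simps)
  qed (use alpha_2_1 ld(3) in auto)
qed

lemma inconsistent: False
  using dim_le_2 dim_ne_2 alpha_2_1_le alpha_2_1 by simp

end

section \<open>The even-weight half of a perfect code in the plane\<close>

definition mod5_code :: "(nat \<Rightarrow> int) set" where
  "mod5_code = {v \<in> vert 2. (v 0 + 2 * v 1) mod 5 = 0}"

abbreviation even_mod5_code :: "(nat \<Rightarrow> int) set" where
  "even_mod5_code \<equiv> {x \<in> mod5_code. even (weight 2 x)}"

text \<open>The distance from \<open>v\<close> to \<open>even_mod5_code\<close> only depends on \<open>k = (v\<^sub>0 + 2 v\<^sub>1) mod 5\<close>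
  and on the parity \<open>p\<close> of \<open>v\<^sub>0 + v\<^sub>1\<close>.\<close>

definition dist_by_residues :: "int \<Rightarrow> int \<Rightarrow> nat" where
  "dist_by_residues k p = (if k = 0 then (if p = 0 then 0 else 3) else (if p = 0 then 2 else 1))"

definition dist_even_mod5 :: "(nat \<Rightarrow> int) \<Rightarrow> nat" where
  "dist_even_mod5 v = dist_by_residues ((v 0 + 2 * v 1) mod 5) ((v 0 + v 1) mod 2)"

definition alpha_0413 :: "nat \<Rightarrow> nat \<Rightarrow> nat" where
  "alpha_0413 i j = (if i = 0 \<and> j = 1 then 4 else if i = 1 \<and> j = 0 then 1 else if i = 1 \<and> j = 2 then 3
     else if i = 2 \<and> j = 1 then 3 else if i = 2 \<and> j = 3 then 1 else if i = 3 \<and> j = 2 then 4 else 0)"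

lemma weight_2_even_iff: "even (weight 2 x) \<longleftrightarrow> (x 0 + x 1) mod 2 = 0"
proof -
  have "weight 2 x = nat (\<bar>x 0\<bar> + \<bar>x 1\<bar>)" by (simp add: weight_def numeral_2_eq_2 lessThan_Suc)
  hence "even (weight 2 x) \<longleftrightarrow> even (\<bar>x 0\<bar> + \<bar>x 1\<bar>)" by (simp add: even_nat_iff)
  also have "\<dots> \<longleftrightarrow> even (x 0 + x 1)" by (simp add: abs_if)
  finally show ?thesis by (simp add: even_iff_mod_2_eq_zero)
qed

lemma mod_eq_mod_add: "A = B + C \<Longrightarrow> A mod m = (B mod m + C) mod (m :: int)"
  by (simp add: mod_add_left_eq)

lemma small_multiple_of_5:
  assumes "\<bar>d0\<bar> + \<bar>d1\<bar> \<le> (2::int)" "d0 + 2 * d1 = 5 * k"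
  shows "d0 = 0 \<and> d1 = 0"
proof -
  have "\<bar>5 * k\<bar> \<le> 4" using assms by arith
  hence "k = 0" by arith
  thus ?thesis using assms by arith
qed

lemma mod5_correction:
  assumes "0 \<le> k" "k \<le> (4::int)"
  obtains a b where "(k + a + 2 * b) mod 5 = 0" "\<bar>a\<bar> + \<bar>b\<bar> \<le> 1"
proof -
  have "k = 0 \<or> k = 1 \<or> k = 2 \<or> k = 3 \<or> k = 4" using assms by auto
  thus ?thesis
    using that[of 0 0] that[of "-1" 0] that[of 0 "-1"] that[of 0 1] that[of 1 0] by auto
qed

lemma mod5_code_perfect: "perfect_code 2 mod5_code"
  unfolding perfect_code_def
proof (intro conjI ballI)
  show "mod5_code \<subseteq> vert 2" by (auto simp: mod5_code_def)
  fix v assume v: "v \<in> vert 2"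
  have "0 \<le> (v 0 + 2 * v 1) mod 5" "(v 0 + 2 * v 1) mod 5 \<le> 4" by simp_all
  then obtain a b where ab: "((v 0 + 2 * v 1) mod 5 + a + 2 * b) mod 5 = 0" "\<bar>a\<bar> + \<bar>b\<bar> \<le> 1"
    by (rule mod5_correction)
  define c where "c = v + axis 0 a + axis 1 b"
  have cv: "c \<in> vert 2" using v by (simp add: c_def vert_add_axis)
  have "(c 0 + 2 * c 1) mod 5 = ((v 0 + 2 * v 1) mod 5 + (a + 2 * b)) mod 5"
    by (rule mod_eq_mod_add) (simp add: c_def)
  hence c: "c \<in> mod5_code" using ab(1) cv by (simp add: mod5_code_def add.assoc)
  have vc: "gdist 2 v c \<le> 1" using ab(2) by (simp add: gdist_2 c_def nat_le_iff)
  show "\<exists>!u. u \<in> mod5_code \<and> gdist 2 v u \<le> 1"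
  proof (rule ex1I[of _ c])
    show "c \<in> mod5_code \<and> gdist 2 v c \<le> 1" using c vc by simp
    fix u assume u: "u \<in> mod5_code \<and> gdist 2 v u \<le> 1"
    have uv: "u \<in> vert 2" using u by (simp add: mod5_code_def)
    have "gdist 2 u c \<le> 2" using gdist_triangle[of 2 u c v] u vc gdist_sym[of 2 u v] by simp
    hence "\<bar>u 0 - c 0\<bar> + \<bar>u 1 - c 1\<bar> \<le> 2" by (simp add: gdist_2 nat_le_iff)
    moreover have "5 dvd ((u 0 - c 0) + 2 * (u 1 - c 1))"
      using u c by (simp add: mod5_code_def mod_eq_0_iff_dvd algebra_simps dvd_diff)
    then obtain q where "(u 0 - c 0) + 2 * (u 1 - c 1) = 5 * q" by (auto simp: dvd_def)
    ultimately have "u 0 - c 0 = 0 \<and> u 1 - c 1 = 0" by (rule small_multiple_of_5)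
    thus "u = c" using vert_2_eqI[OF uv cv] by simp
  qed
qed

lemma dist_even_mod5_add_axis:
  assumes k: "k = (v 0 + 2 * v 1) mod 5" and p: "p = (v 0 + v 1) mod 2"
  shows "dist_even_mod5 (v + axis 0 s) = dist_by_residues ((k + s) mod 5) ((p + s) mod 2)"
    and "dist_even_mod5 (v + axis 1 s) = dist_by_residues ((k + 2 * s) mod 5) ((p + s) mod 2)"
proof -
  have "(v 0 + s + 2 * v 1) mod 5 = (k + s) mod 5" "(v 0 + 2 * (v 1 + s)) mod 5 = (k + 2 * s) mod 5"
    "(v 0 + s + v 1) mod 2 = (p + s) mod 2" "(v 0 + (v 1 + s)) mod 2 = (p + s) mod 2"
    unfolding k p by (rule mod_eq_mod_add; simp)+
  thus "dist_even_mod5 (v + axis 0 s) = dist_by_residues ((k + s) mod 5) ((p + s) mod 2)"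
    "dist_even_mod5 (v + axis 1 s) = dist_by_residues ((k + 2 * s) mod 5) ((p + s) mod 2)"
    by (simp_all add: dist_even_mod5_def)
qed

lemma residues_range:
  fixes v :: "nat \<Rightarrow> int"
  shows "(v 0 + 2 * v 1) mod 5 \<in> {0, 1, 2, 3, 4}" "(v 0 + v 1) mod 2 \<in> {0, 1}"
proof -
  have "0 \<le> (v 0 + 2 * v 1) mod 5" "(v 0 + 2 * v 1) mod 5 < 5" by simp_all
  thus "(v 0 + 2 * v 1) mod 5 \<in> {0, 1, 2, 3, 4}" by auto
qed (auto simp: mod_2_eq_odd)

lemma dist_by_residues_step:
  assumes "k \<in> {0, 1, 2, 3, 4}" "p \<in> {0, 1}" "s = 1 \<or> s = -1"
  shows "dist_by_residues ((k + s) mod 5) ((p + s) mod 2) \<le> dist_by_residues k p + 1"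
    and "dist_by_residues ((k + 2 * s) mod 5) ((p + s) mod 2) \<le> dist_by_residues k p + 1"
  using assms by (auto simp: dist_by_residues_def)

lemma dist_even_mod5_add_axis_le:
  assumes "i < 2" "\<bar>s\<bar> = 1"
  shows "dist_even_mod5 (v + axis i s) \<le> dist_even_mod5 v + 1"
proof -
  define k where "k = (v 0 + 2 * v 1) mod 5"
  define p where "p = (v 0 + v 1) mod 2"
  have "s = 1 \<or> s = -1" using assms(2) by auto
  note step = dist_by_residues_step[OF residues_range[of v, folded k_def p_def] this]
  have "dist_even_mod5 v = dist_by_residues k p" by (simp add: dist_even_mod5_def k_def p_def)
  moreover have "i = 0 \<or> i = 1" using assms(1) by auto
  ultimately show ?thesis
    using step dist_even_mod5_add_axis[OF k_def p_def, of s] by auto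
qed

lemma dist_even_mod5_code: "c \<in> even_mod5_code \<Longrightarrow> dist_even_mod5 c = 0"
  by (simp add: mod5_code_def weight_2_even_iff dist_even_mod5_def dist_by_residues_def)

lemma dist_even_mod5_le_gdist:
  "v \<in> vert 2 \<Longrightarrow> c \<in> even_mod5_code \<Longrightarrow> dist_even_mod5 v \<le> gdist 2 v c"
proof (induction "gdist 2 v c" arbitrary: v)
  case 0
  hence "v = c" using gdist_eq_0_iff[of v 2 c] by (simp add: mod5_code_def)
  thus ?case using dist_even_mod5_code[OF 0(3)] by simp
next
  case (Suc m)
  have cv: "c \<in> vert 2" using Suc(4) by (simp add: mod5_code_def)
  obtain w where w: "w \<in> vert 2" "adj 2 v w" "gdist 2 w c = m"
    using gdist_step_towards[OF Suc(3) cv Suc(2)[symmetric]] .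
  obtain i s where st: "i < 2" "\<bar>s\<bar> = 1" "w = v + axis i s" using adjE[OF w(2) Suc(3) w(1)] .
  have "v = w + axis i (-s)" using st(3) by (auto simp: fun_eq_iff)
  hence "dist_even_mod5 v \<le> dist_even_mod5 w + 1"
    using dist_even_mod5_add_axis_le[OF st(1), of "-s" w] st(2) by simp
  also have "\<dots> \<le> m + 1" using Suc(1)[OF w(3)[symmetric] w(1) Suc(4)] w(3) by simp
  finally show ?case using Suc(2) by simp
qed

lemma residue_correction:
  assumes "k \<in> {0, 1, 2, 3, 4}" "p \<in> {0, 1}"
  obtains a b where "(k + a + 2 * b) mod 5 = 0" "(p + a + b) mod 2 = 0"
    "nat (\<bar>a\<bar> + \<bar>b\<bar>) = dist_by_residues k p"
  using assms that[of 0 0] that[of 1 2] that[of 0 2] that[of "-1" 0] that[of 1 1] that[of 0 "-1"]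
    that[of 2 0] that[of 0 1] that[of "-1" 1] that[of 1 0]
  by (auto simp: dist_by_residues_def)

lemma even_mod5_code_dist_attained:
  assumes v: "v \<in> vert 2"
  obtains c where "c \<in> even_mod5_code" "gdist 2 v c = dist_even_mod5 v"
proof -
  define k where "k = (v 0 + 2 * v 1) mod 5"
  define p where "p = (v 0 + v 1) mod 2"
  obtain a b where ab: "(k + a + 2 * b) mod 5 = 0" "(p + a + b) mod 2 = 0"
    "nat (\<bar>a\<bar> + \<bar>b\<bar>) = dist_by_residues k p"
    using residue_correction[OF residues_range[of v, folded k_def p_def]] by blast
  define c where "c = v + axis 0 a + axis 1 b"
  have "(c 0 + 2 * c 1) mod 5 = (k + (a + 2 * b)) mod 5"
    unfolding k_def by (rule mod_eq_mod_add) (simp add: c_def)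
  moreover have "(c 0 + c 1) mod 2 = (p + (a + b)) mod 2"
    unfolding p_def by (rule mod_eq_mod_add) (simp add: c_def)
  moreover have "c \<in> vert 2" using v by (simp add: c_def vert_add_axis)
  ultimately have "c \<in> even_mod5_code" using ab(1,2) by (simp add: mod5_code_def weight_2_even_iff add.assoc)
  moreover have "gdist 2 v c = dist_even_mod5 v"
    using ab(3) by (simp add: gdist_2 c_def dist_even_mod5_def k_def p_def)
  ultimately show ?thesis using that by blast
qed

lemma dcode_even_mod5_code:
  assumes v: "v \<in> vert 2"
  shows "dcode 2 even_mod5_code v = dist_even_mod5 v"
proof -
  obtain c where c: "c \<in> even_mod5_code" "gdist 2 v c = dist_even_mod5 v"
    using even_mod5_code_dist_attained[OF v] .
  hence ne: "even_mod5_code \<noteq> {}" by blast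
  obtain c' where c': "c' \<in> even_mod5_code" "dcode 2 even_mod5_code v = gdist 2 v c'"
    using dcode_attained[OF ne] .
  show ?thesis
    using dcode_le[OF c(1), of 2 v] c(2) dist_even_mod5_le_gdist[OF v c'(1)] c'(2) by simp
qed

lemma card_filter_4:
  assumes "a \<noteq> b" "a \<noteq> c" "a \<noteq> d" "b \<noteq> c" "b \<noteq> d" "c \<noteq> d"
  shows "card {u \<in> {a, b, c, d}. P u} =
    of_bool (P a) + of_bool (P b) + of_bool (P c) + of_bool (P d)"
proof -
  have filter_insert: "{u \<in> insert x A. P u} = (if P x then insert x {u \<in> A. P u} else {u \<in> A. P u})"
    for x A by auto
  show ?thesis unfolding filter_insert using assms by (simp add: card_insert_if)
qed

lemma alpha_0413_by_residues:
  assumes "k \<in> {0, 1, 2, 3, 4}" "p \<in> {0, 1}" "j \<le> 3"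
  shows "of_bool (dist_by_residues ((k + 1) mod 5) ((p + 1) mod 2) = j)
    + of_bool (dist_by_residues ((k + -1) mod 5) ((p + -1) mod 2) = j)
    + of_bool (dist_by_residues ((k + 2 * 1) mod 5) ((p + 1) mod 2) = j)
    + of_bool (dist_by_residues ((k + 2 * -1) mod 5) ((p + -1) mod 2) = j)
    = alpha_0413 (dist_by_residues k p) j"
proof -
  have "k = 0 \<or> k = 1 \<or> k = 2 \<or> k = 3 \<or> k = 4" "p = 0 \<or> p = 1" "j = 0 \<or> j = 1 \<or> j = 2 \<or> j = 3"
    using assms by auto
  thus ?thesis by (elim disjE) (simp_all add: dist_by_residues_def alpha_0413_def)
qed

lemma card_nbrs_layer_even_mod5_code:
  assumes v: "v \<in> vert 2" and j: "j \<le> 3"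
  shows "card {u \<in> vert 2. adj 2 v u \<and> u \<in> layer 2 even_mod5_code j} = alpha_0413 (dist_even_mod5 v) j"
proof -
  define k where "k = (v 0 + 2 * v 1) mod 5"
  define p where "p = (v 0 + v 1) mod 2"
  have "{u \<in> vert 2. adj 2 v u \<and> u \<in> layer 2 even_mod5_code j} = {u \<in> nbrs 2 v. dist_even_mod5 u = j}"
    by (auto simp: nbrs_def layer_def dcode_even_mod5_code)
  also have "\<dots> = {u \<in> {v + axis 0 1, v + axis 0 (-1), v + axis 1 1, v + axis 1 (-1)}. dist_even_mod5 u = j}"
    using nbrs_2[OF v, of 1] by simp
  finally have S: "{u \<in> vert 2. adj 2 v u \<and> u \<in> layer 2 even_mod5_code j} = \<dots>" .
  have d: "v + axis 0 1 \<noteq> v + axis 0 (-1)" "v + axis 0 1 \<noteq> v + axis 1 1" "v + axis 0 1 \<noteq> v + axis 1 (-1)"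
    "v + axis 0 (-1) \<noteq> v + axis 1 1" "v + axis 0 (-1) \<noteq> v + axis 1 (-1)" "v + axis 1 1 \<noteq> v + axis 1 (-1)"
    by (rule add_axis_neq; simp)+
  have "dist_even_mod5 v = dist_by_residues k p" by (simp add: dist_even_mod5_def k_def p_def)
  thus ?thesis
    unfolding S card_filter_4[OF d] dist_even_mod5_add_axis[OF k_def p_def]
    using alpha_0413_by_residues[OF residues_range[of v, folded k_def p_def] j] by simp
qed

lemma even_mod5_code_CRC: "is_CRC 2 even_mod5_code 3 alpha_0413"
  unfolding is_CRC_def covering_radius_def
proof (intro conjI ballI allI impI)
  show "even_mod5_code \<noteq> {}" using even_mod5_code_dist_attained[of "\<lambda>_. 0"] by (auto simp: vert_def)
  show "even_mod5_code \<subseteq> vert 2" by (auto simp: mod5_code_def)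
  show "dcode 2 even_mod5_code v \<le> 3" if "v \<in> vert 2" for v
    by (simp add: dcode_even_mod5_code[OF that] dist_even_mod5_def dist_by_residues_def)
  have "axis 0 1 + axis 1 2 \<in> vert 2" by (simp add: vert_def)
  moreover have "dist_even_mod5 (axis 0 1 + axis 1 2) = 3" by (simp add: dist_even_mod5_def dist_by_residues_def)
  ultimately show "\<exists>v\<in>vert 2. dcode 2 even_mod5_code v = 3" using dcode_even_mod5_code by metis
  show "card {u \<in> vert 2. adj 2 v u \<and> u \<in> layer 2 even_mod5_code j} = alpha_0413 i j"
    if "i \<le> 3" "j \<le> 3" "v \<in> layer 2 even_mod5_code i" for i j v
    using that card_nbrs_layer_even_mod5_code dcode_even_mod5_code by (auto simp: layer_def)
  show "alpha_0413 i j = 0" if "i \<le> 3" "j \<le> 3" "i > j + 1 \<or> j > i + 1" for i j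
    using that by (auto simp: alpha_0413_def)
qed

lemma alpha_0413_matrix: "matrix_0413 3 alpha_0413"
  by (simp add: matrix_0413_def alpha_0413_def)

lemma even_mod5_code_null2_crc:
  "is_CRC 2 even_mod5_code 3 alpha_0413 \<and> r_null 2 alpha_0413 \<and> alpha_0413 1 0 = 1 \<and> alpha_0413 2 1 = 3"
  using even_mod5_code_CRC by (simp add: r_null_def alpha_0413_def less_2_cases_iff)

lemma null2_crc_1_3_dim:
  assumes "is_CRC n C \<rho> \<alpha>" "r_null 2 \<alpha>" "2 \<le> \<rho>" "\<alpha> 1 0 = 1" "\<alpha> 2 1 = 3"
  shows "n = 2"
proof -
  interpret crc_1_3 n C \<rho> \<alpha> by unfold_locales (use assms in auto)
  show ?thesis by (rule dim_eq_2)
qed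

lemma null2_crc_1_3_matrix:
  assumes "is_CRC 2 C \<rho> \<alpha>" "r_null 2 \<alpha>" "2 \<le> \<rho>" "\<alpha> 1 0 = 1" "\<alpha> 2 1 = 3"
  shows "matrix_0413 \<rho> \<alpha>"
proof -
  interpret crc_1_3_plane 2 C \<rho> \<alpha> by unfold_locales (use assms in auto)
  show ?thesis by (rule parameter_matrix)
qed

lemma no_null2_crc_2_3:
  assumes "is_CRC n C \<rho> \<alpha>" "r_null 2 \<alpha>" "2 \<le> \<rho>" "\<alpha> 1 0 = 2" "\<alpha> 2 1 = 3"
  shows False
proof -
  interpret crc_2_3 n C \<rho> \<alpha> by unfold_locales (use assms in auto)
  show False by (rule inconsistent)
qed

theorem mainTheorem5:
  shows "(\<forall>n\<ge>1. (\<exists>C \<rho> \<alpha>. is_CRC n C \<rho> \<alpha> \<and> r_null 2 \<alpha> \<and> 2 \<le> \<rho> \<and>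
                          \<alpha> 1 0 = 1 \<and> \<alpha> 2 1 = 3) \<longleftrightarrow> n = 2)
     \<and> (\<forall>C \<rho> \<alpha>. is_CRC 2 C \<rho> \<alpha> \<and> r_null 2 \<alpha> \<and> 2 \<le> \<rho> \<and>
                  \<alpha> 1 0 = 1 \<and> \<alpha> 2 1 = 3 \<longrightarrow> matrix_0413 \<rho> \<alpha>)
     \<and> (\<exists>P \<alpha>. perfect_code 2 P \<and>
           is_CRC 2 {x \<in> P. even (weight 2 x)} 3 \<alpha> \<and> matrix_0413 3 \<alpha>)
     \<and> (\<forall>n\<ge>1. \<not> (\<exists>C \<rho> \<alpha>. is_CRC n C \<rho> \<alpha> \<and> r_null 2 \<alpha> \<and> 2 \<le> \<rho> \<and>
                          \<alpha> 1 0 = 2 \<and> \<alpha> 2 1 = 3))"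
proof (intro conjI allI impI)
  fix n :: nat
  show "(\<exists>C \<rho> \<alpha>. is_CRC n C \<rho> \<alpha> \<and> r_null 2 \<alpha> \<and> 2 \<le> \<rho> \<and> \<alpha> 1 0 = 1 \<and> \<alpha> 2 1 = 3) \<longleftrightarrow> n = 2"
  proof
    assume "\<exists>C \<rho> \<alpha>. is_CRC n C \<rho> \<alpha> \<and> r_null 2 \<alpha> \<and> 2 \<le> \<rho> \<and> \<alpha> 1 0 = 1 \<and> \<alpha> 2 1 = 3"
    thus "n = 2" using null2_crc_1_3_dim by blast
  next
    assume "n = 2"
    thus "\<exists>C \<rho> \<alpha>. is_CRC n C \<rho> \<alpha> \<and> r_null 2 \<alpha> \<and> 2 \<le> \<rho> \<and> \<alpha> 1 0 = 1 \<and> \<alpha> 2 1 = 3"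
      using even_mod5_code_null2_crc
      by (intro exI[of _ even_mod5_code] exI[of _ "3 :: nat"] exI[of _ alpha_0413]) simp
  qed
next
  fix C \<rho> \<alpha>
  assume "is_CRC 2 C \<rho> \<alpha> \<and> r_null 2 \<alpha> \<and> 2 \<le> \<rho> \<and> \<alpha> 1 0 = 1 \<and> \<alpha> 2 1 = 3"
  thus "matrix_0413 \<rho> \<alpha>" using null2_crc_1_3_matrix by blast
next
  show "\<exists>P \<alpha>. perfect_code 2 P \<and> is_CRC 2 {x \<in> P. even (weight 2 x)} 3 \<alpha> \<and> matrix_0413 3 \<alpha>"
    using mod5_code_perfect even_mod5_code_CRC alpha_0413_matrix by blast
next
  fix n :: nat
  show "\<not> (\<exists>C \<rho> \<alpha>. is_CRC n C \<rho> \<alpha> \<and> r_null 2 \<alpha> \<and> 2 \<le> \<rho> \<and> \<alpha> 1 0 = 2 \<and> \<alpha> 2 1 = 3)"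
    using no_null2_crc_2_3 by blast
qed

end
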